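(* Let $n\ge1$; for $i\in[n]$ let $d_i\ge1$ be an integer, $p_{i0}<\cdots<p_{id_i}$ reals, $\mathcal{X}=\prod_i\{p_{i0},\dots,p_{id_i}\}$, and $f_i:\{p_{i0},\dots,p_{id_i}\}\to[L_i,U_i]$. Let $\phi:\prod_i[L_i,U_i]\to\mathbb{R}$ be supermodular. Let $\sigma=(\sigma_1,\dots,\sigma_n)$ where each $\sigma_i$ is a permutation of $\{0,\dots,d_i\}$ with $f_i(p_{i,\sigma_i(0)})\le f_i(p_{i,\sigma_i(1)})\le\cdots\le f_i(p_{i,\sigma_i(d_i)})$, and let $\psi^\sigma(\boldsymbol{j})=\phi(f_1(p_{1,\sigma_1(j_1)}),\dots,f_n(p_{n,\sigma_n(j_n)}))$ for $\boldsymbol{j}\in\mathcal{G}$. Then the set $$E=\Bigl\{(\boldsymbol{x},\boldsymbol{z},\mu):\boldsymbol{z}\in\{0,1\}^N,\ (x_i,\boldsymbol{z}_i)\in B_i\ \forall i,\ \boldsymbol{z}'=(L^\sigma)^{-1}(\boldsymbol{z}),\ \mu\le\psi^\sigma(\boldsymbol{j}^0)+\sum_{t\in[N]}\bigl(\psi^\sigma(\boldsymbol{j}^t)-\psi^\sigma(\boldsymbol{j}^{t-1})\bigr)z'_{\pi_t}\ \forall\pi\in\Pi\Bigr\}$$ (where for each $\pi$, $\boldsymbol{j}^0,\dots,\boldsymbol{j}^N$ is its point representation) is an ideal MIP formulation of the hypograph $\{(\boldsymbol{x},\mu)\in\mathcal{X}\times\mathbb{R}:\mu\le\phi(f_1(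x_1),\dots,f_n(x_n))\}$.
   Context: $[n]=\{1,\dots,n\}$, $N=\sum_i d_i$. A function $g$ on a set $X\subseteq\mathbb{R}^n$ closed under componentwise max $\vee$ and min $\wedge$ is supermodular if $g(\boldsymbol{x}\vee\boldsymbol{y})+g(\boldsymbol{x}\wedge\boldsymbol{y})\ge g(\boldsymbol{x})+g(\boldsymbol{y})$ for all $\boldsymbol{x},\boldsymbol{y}$. $\Delta^d=\{\boldsymbol{z}\in\mathbb{R}^d:1\ge z_1\ge\cdots\ge z_d\ge0\}$; variables $\boldsymbol{z}=(\boldsymbol{z}_1,\dots,\boldsymbol{z}_n)$, $\boldsymbol{z}_i\in\mathbb{R}^{d_i}$. $B_i=\{(x_i,\boldsymbol{z}_i):x_i=p_{i0}+\sum_{j\in[d_i]}(p_{ij}-p_{i,j-1})z_{ij},\ \boldsymbol{z}_i\in\Delta^{d_i}\}$. $\mathcal{G}=\prod_i\{0,1,\dots,d_i\}$. A staircase is a sequence $\pi=(\pi_1,\dots,\pi_N)$ with $\pi_t=(\pi_t(1),\pi_t(2))$, $\pi_t(1)\in[n]$, each $i$ occurring as $\pi_t(1)$ for exactly $d_i$ values of $t$, and $\pi_t(2)=|\{s\le t:\pi_s(1)=\pi_t(1)\}|$; $\Pi$ is the set of all staircases; $z'_{\pi_t}:=z'_{\pi_t(1),\pi_t(2)}$. Its point representation is $\boldsymbol{j}^0=(0,\dots,0)$, $\boldsymbol{j}^t=\boldsymbol{j}^{t-1}+\boldsymbol{e}_{\pi_t(1)}$ ($\boldsymbol{e}_i$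 the $i$-th unit vector of $\mathbb{R}^n$). For each $i$, let $T_i:\mathbb{R}^{d_i}\to\mathbb{R}^{d_i+1}$, $\lambda_{ij}=z_{ij}-z_{i,j+1}$ for $j=0,\dots,d_i$ with conventions $z_{i0}=1$, $z_{i,d_i+1}=0$; its inverse is $z_{ij}=\sum_{k=j}^{d_i}\lambda_{ik}$, $j\in[d_i]$. Let $P^{\sigma_i}\in\mathbb{R}^{(d_i+1)\times(d_i+1)}$ have entry $(j,k)$ equal to $1$ if $j=\sigma_i(k)$ and $0$ otherwise. Define $L^{\sigma_i}(\boldsymbol{z}'_i)=T_i^{-1}(P^{\sigma_i}T_i(\boldsymbol{z}'_i))$ and $L^\sigma(\boldsymbol{z}')=(L^{\sigma_1}(\boldsymbol{z}'_1),\dots,L^{\sigma_n}(\boldsymbol{z}'_n))$, an invertible affine map with inverse $(L^\sigma)^{-1}$. An MIP formulation of a set $S$ is a polyhedron with binary restrictions on some variables whose projection onto the original variables equals $S$; it is ideal if every vertex of the LP relaxation (binary restrictions dropped) has those variables binary. *)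

theory Defs
  imports "HOL-Analysis.Analysis"
begin

text \<open>Points of the extended space: (x, z, mu) with x i for i in [n],
  z i j for i in [n], j in [d i], and mu real.  Coordinates outside these
  index ranges are required to be zero (see mip_space).\<close>

type_synonym pt = "(nat \<Rightarrow> real) \<times> (nat \<Rightarrow> nat \<Rightarrow> real) \<times> real"

definition mip_space :: "nat \<Rightarrow> (nat \<Rightarrow> nat) \<Rightarrow> pt set" where
  "mip_space n d = {(x, z, mu). (\<forall>i. i \<notin> {1..n} \<longrightarrow> x i = 0) \<and>
      (\<forall>i j. \<not> (i \<in> {1..n} \<and> j \<in> {1..d i}) \<longrightarrow> z i j = 0)}"

definition lin_form :: "nat \<Rightarrow> (nat \<Rightarrow> nat) \<Rightarrow> pt \<Rightarrow> pt \<Rightarrow> real" where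
  "lin_form n d c q = (case c of (cx, cz, cm) \<Rightarrow> case q of (x, z, mu) \<Rightarrow>
      (\<Sum>i\<in>{1..n}. cx i * x i) + (\<Sum>i\<in>{1..n}. \<Sum>j\<in>{1..d i}. cz i j * z i j) + cm * mu)"

definition polyhedron_in :: "nat \<Rightarrow> (nat \<Rightarrow> nat) \<Rightarrow> pt set \<Rightarrow> bool" where
  "polyhedron_in n d Q \<longleftrightarrow> (\<exists>F. finite F \<and>
      Q = {q \<in> mip_space n d. \<forall>(c, b) \<in> F. lin_form n d c q \<le> b})"

definition comb :: "real \<Rightarrow> pt \<Rightarrow> pt \<Rightarrow> pt" where
  "comb u a b = (case a of (xa, za, ma) \<Rightarrow> case b of (xb, zb, mb) \<Rightarrow>
      (\<lambda>i. (1 - u) * xa i + u * xb i, \<lambda>i j. (1 - u) * za i j + u * zb i j,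
       (1 - u) * ma + u * mb))"

definition vertex_of :: "pt set \<Rightarrow> pt \<Rightarrow> bool" where
  "vertex_of Q q \<longleftrightarrow> q \<in> Q \<and>
     (\<forall>a\<in>Q. \<forall>b\<in>Q. \<forall>u. 0 < u \<and> u < 1 \<and> q = comb u a b \<longrightarrow> a = b)"

definition z_binary :: "nat \<Rightarrow> (nat \<Rightarrow> nat) \<Rightarrow> pt \<Rightarrow> bool" where
  "z_binary n d q = (case q of (x, z, mu) \<Rightarrow>
      (\<forall>i\<in>{1..n}. \<forall>j\<in>{1..d i}. z i j \<in> {0, 1}))"

definition MIP_formulation ::
  "nat \<Rightarrow> (nat \<Rightarrow> nat) \<Rightarrow> pt set \<Rightarrow> pt set \<Rightarrow> ((nat \<Rightarrow> real) \<times> real) set \<Rightarrow> bool" where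
  "MIP_formulation n d Q E S \<longleftrightarrow> polyhedron_in n d Q \<and>
      E = {q \<in> Q. z_binary n d q} \<and>
      (\<lambda>(x, z, mu). (x, mu)) ` E = S"

definition ideal_MIP_formulation ::
  "nat \<Rightarrow> (nat \<Rightarrow> nat) \<Rightarrow> pt set \<Rightarrow> pt set \<Rightarrow> ((nat \<Rightarrow> real) \<times> real) set \<Rightarrow> bool" where
  "ideal_MIP_formulation n d Q E S \<longleftrightarrow> MIP_formulation n d Q E S \<and>
      (\<forall>q. vertex_of Q q \<longrightarrow> z_binary n d q)"

definition supermodular_on :: "(nat \<Rightarrow> real) set \<Rightarrow> ((nat \<Rightarrow> real) \<Rightarrow> real) \<Rightarrow> bool" where
  "supermodular_on X g \<longleftrightarrow> (\<forall>x\<in>X. \<forall>y\<in>X.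
      g (\<lambda>i. max (x i) (y i)) + g (\<lambda>i. min (x i) (y i)) \<ge> g x + g y)"

definition vecn :: "nat \<Rightarrow> (nat \<Rightarrow> real) \<Rightarrow> (nat \<Rightarrow> real)" where
  "vecn n v = (\<lambda>i. if i \<in> {1..n} then v i else 0)"

definition dom_box :: "nat \<Rightarrow> (nat \<Rightarrow> real) \<Rightarrow> (nat \<Rightarrow> real) \<Rightarrow> (nat \<Rightarrow> real) set" where
  "dom_box n L U = {y. (\<forall>i\<in>{1..n}. L i \<le> y i \<and> y i \<le> U i) \<and> (\<forall>i. i \<notin> {1..n} \<longrightarrow> y i = 0)}"

definition gridX :: "nat \<Rightarrow> (nat \<Rightarrow> nat) \<Rightarrow> (nat \<Rightarrow> nat \<Rightarrow> real) \<Rightarrow> (nat \<Rightarrow> real) set" where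
  "gridX n d p = {x. (\<forall>i\<in>{1..n}. \<exists>j\<in>{0..d i}. x i = p i j) \<and> (\<forall>i. i \<notin> {1..n} \<longrightarrow> x i = 0)}"

definition hypograph ::
  "nat \<Rightarrow> (nat \<Rightarrow> nat) \<Rightarrow> (nat \<Rightarrow> nat \<Rightarrow> real) \<Rightarrow> (nat \<Rightarrow> real \<Rightarrow> real)
   \<Rightarrow> ((nat \<Rightarrow> real) \<Rightarrow> real) \<Rightarrow> ((nat \<Rightarrow> real) \<times> real) set" where
  "hypograph n d p f phi = {(x, mu). x \<in> gridX n d p \<and> mu \<le> phi (vecn n (\<lambda>i. f i (x i)))}"

definition psi ::
  "nat \<Rightarrow> (nat \<Rightarrow> nat \<Rightarrow> real) \<Rightarrow> (nat \<Rightarrow> real \<Rightarrow> real) \<Rightarrow> ((nat \<Rightarrow> real) \<Rightarrow> real)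
   \<Rightarrow> (nat \<Rightarrow> nat \<Rightarrow> nat) \<Rightarrow> (nat \<Rightarrow> nat) \<Rightarrow> real" where
  "psi n p f phi \<sigma> jj = phi (vecn n (\<lambda>i. f i (p i (\<sigma> i (jj i)))))"

definition in_B :: "nat \<Rightarrow> (nat \<Rightarrow> real) \<Rightarrow> real \<Rightarrow> (nat \<Rightarrow> real) \<Rightarrow> bool" where
  "in_B d ps xi zi \<longleftrightarrow>
     xi = ps 0 + (\<Sum>j\<in>{1..d}. (ps j - ps (j - 1)) * zi j) \<and>
     (d \<ge> 1 \<longrightarrow> zi 1 \<le> 1 \<and> zi d \<ge> 0) \<and> (\<forall>j\<in>{1..<d}. zi j \<ge> zi (Suc j))"

definition Tmap :: "nat \<Rightarrow> (nat \<Rightarrow> real) \<Rightarrow> (nat \<Rightarrow> real)" where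
  "Tmap d zi = (let ze = (\<lambda>j. if j = 0 then 1 else if j \<le> d then zi j else 0)
      in (\<lambda>j. if j \<le> d then ze j - ze (Suc j) else 0))"

definition Tinv :: "nat \<Rightarrow> (nat \<Rightarrow> real) \<Rightarrow> (nat \<Rightarrow> real)" where
  "Tinv d lam = (\<lambda>j. if j \<in> {1..d} then (\<Sum>k\<in>{j..d}. lam k) else 0)"

definition Pmul :: "nat \<Rightarrow> (nat \<Rightarrow> nat) \<Rightarrow> (nat \<Rightarrow> real) \<Rightarrow> (nat \<Rightarrow> real)" where
  "Pmul d s lam = (\<lambda>j. if j \<le> d then (\<Sum>k\<in>{0..d}. (if j = s k then 1 else 0) * lam k) else 0)"

definition Lsig :: "nat \<Rightarrow> (nat \<Rightarrow> nat) \<Rightarrow> (nat \<Rightarrow> nat \<Rightarrow> nat) \<Rightarrow> (nat \<Rightarrow> nat \<Rightarrow> real) \<Rightarrow> (nat \<Rightarrow> nat \<Rightarrow> real)" where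
  "Lsig n d \<sigma> z' = (\<lambda>i. if i \<in> {1..n} then Tinv (d i) (Pmul (d i) (\<sigma> i) (Tmap (d i) (z' i)))
                        else (\<lambda>_. 0))"

definition staircase :: "nat \<Rightarrow> (nat \<Rightarrow> nat) \<Rightarrow> (nat \<Rightarrow> nat \<times> nat) \<Rightarrow> bool" where
  "staircase n d \<pi> \<longleftrightarrow> (let N = (\<Sum>i\<in>{1..n}. d i) in
     (\<forall>t\<in>{1..N}. fst (\<pi> t) \<in> {1..n}) \<and>
     (\<forall>i\<in>{1..n}. card {t\<in>{1..N}. fst (\<pi> t) = i} = d i) \<and>
     (\<forall>t\<in>{1..N}. snd (\<pi> t) = card {s\<in>{1..t}. fst (\<pi> s) = fst (\<pi> t)}))"

fun jpt :: "(nat \<Rightarrow> nat \<times> nat) \<Rightarrow> nat \<Rightarrow> (nat \<Rightarrow> nat)" where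
  "jpt \<pi> 0 = (\<lambda>i. 0)"
| "jpt \<pi> (Suc t) = (\<lambda>i. jpt \<pi> t i + (if i = fst (\<pi> (Suc t)) then 1 else 0))"

definition E_relax ::
  "nat \<Rightarrow> (nat \<Rightarrow> nat) \<Rightarrow> (nat \<Rightarrow> nat \<Rightarrow> real) \<Rightarrow> (nat \<Rightarrow> real \<Rightarrow> real)
   \<Rightarrow> ((nat \<Rightarrow> real) \<Rightarrow> real) \<Rightarrow> (nat \<Rightarrow> nat \<Rightarrow> nat) \<Rightarrow> pt set" where
  "E_relax n d p f phi \<sigma> = {(x, z, mu). (x, z, mu) \<in> mip_space n d \<and>
      (\<forall>i\<in>{1..n}. in_B (d i) (p i) (x i) (z i)) \<and>
      (\<exists>z'. Lsig n d \<sigma> z' = z \<and>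
        (\<forall>\<pi>. staircase n d \<pi> \<longrightarrow>
           mu \<le> psi n p f phi \<sigma> (jpt \<pi> 0) +
             (\<Sum>t\<in>{1..(\<Sum>i\<in>{1..n}. d i)}.
                (psi n p f phi \<sigma> (jpt \<pi> t) - psi n p f phi \<sigma> (jpt \<pi> (t - 1)))
                * z' (fst (\<pi> t)) (snd (\<pi> t)))))}"

definition E_set ::
  "nat \<Rightarrow> (nat \<Rightarrow> nat) \<Rightarrow> (nat \<Rightarrow> nat \<Rightarrow> real) \<Rightarrow> (nat \<Rightarrow> real \<Rightarrow> real)
   \<Rightarrow> ((nat \<Rightarrow> real) \<Rightarrow> real) \<Rightarrow> (nat \<Rightarrow> nat \<Rightarrow> nat) \<Rightarrow> pt set" where
  "E_set n d p f phi \<sigma> = {q \<in> E_relax n d p f phi \<sigma>. z_binary n d q}"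

end

theory Submission
  imports Defs "HOL-Library.List_Lexorder"
begin

text \<open>Each \<open>\<sigma>\<^sub>i\<close> sorts the values \<open>f\<^sub>i(p\<^sub>i\<^sub>j)\<close>, so \<open>\<psi>\<^sup>\<sigma>\<close> is supermodular on the grid.
  Writing a point \<open>z'\<close> of \<open>\<Delta>\<close> as a convex combination of the step vectors of the grid points
  along the staircase that visits the coordinates of \<open>z'\<close> in decreasing order, supermodularity
  shows that this staircase gives the least of all the bounds on \<open>\<mu>\<close>: the constraints on \<open>\<mu>\<close>
  describe the concave envelope of \<open>\<psi>\<^sup>\<sigma>\<close>, which agrees with \<open>\<psi>\<^sup>\<sigma>\<close> at binary points. A
  point with a fractional coordinate \<open>u\<close> is a proper convex combination of the two points
  obtained by cutting \<open>z'\<close> at level \<open>u\<close>; these share the sorting staircase, so both stay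
  feasible and the point is not a vertex. The map \<open>L\<^sup>\<sigma>\<close> only permutes the vertices of each
  block simplex, which transfers everything from \<open>z'\<close> to \<open>z\<close>.\<close>

section \<open>The simplices \<open>\<Delta>\<^sup>d\<close> and the block maps\<close>

definition inverse_perms :: "nat \<Rightarrow> (nat \<Rightarrow> nat) \<Rightarrow> (nat \<Rightarrow> nat) \<Rightarrow> bool" where
  "inverse_perms d s t \<longleftrightarrow> (\<forall>k\<le>d. s k \<le> d \<and> t k \<le> d \<and> s (t k) = k \<and> t (s k) = k)"

lemma inverse_perms_sym: "inverse_perms d s t \<Longrightarrow> inverse_perms d t s"
  unfolding inverse_perms_def by blast

lemma inverse_permsD:
  assumes "inverse_perms d s t" "k \<le> d"
  shows "s k \<le> d" "t k \<le> d" "s (t k) = k" "t (s k) = k"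
  using assms unfolding inverse_perms_def by blast+

lemma inverse_perms_inv_into:
  assumes "bij_betw s {0..d} {0..d}"
  shows "inverse_perms d s (inv_into {0..d} s)"
  unfolding inverse_perms_def
  using bij_betw_apply[OF assms] bij_betw_apply[OF bij_betw_inv_into[OF assms]]
    bij_betw_inv_into_left[OF assms] bij_betw_inv_into_right[OF assms] by auto

definition in_Delta :: "nat \<Rightarrow> (nat \<Rightarrow> real) \<Rightarrow> bool" where
  "in_Delta d w \<longleftrightarrow> (d \<ge> 1 \<longrightarrow> w 1 \<le> 1 \<and> w d \<ge> 0) \<and> (\<forall>j\<in>{1..<d}. w j \<ge> w (Suc j))"

definition Lblock :: "nat \<Rightarrow> (nat \<Rightarrow> nat) \<Rightarrow> (nat \<Rightarrow> real) \<Rightarrow> (nat \<Rightarrow> real)" where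
  "Lblock d s w = Tinv d (Pmul d s (Tmap d w))"

lemma sum_diff_Suc_telescope:
  fixes f :: "nat \<Rightarrow> real"
  assumes "m \<le> Suc n"
  shows "(\<Sum>i = m..n. f i - f (Suc i)) = f m - f (Suc n)"
  using sum_Suc_diff[OF assms, of "\<lambda>i. - f i"] by simp

lemma in_Delta_antimono:
  assumes "in_Delta d w" "1 \<le> j" "j \<le> j'" "j' \<le> d"
  shows "w j' \<le> w j"
  using assms(3,4)
proof (induction j' rule: dec_induct)
  case (step m)
  then have "w (Suc m) \<le> w m" using assms(1,2) by (auto simp: in_Delta_def)
  then show ?case using step by simp
qed simp

lemma in_Delta_bounds:
  assumes "in_Delta d w" "j \<in> {1..d}"
  shows "0 \<le> w j" "w j \<le> 1"
  using in_Delta_antimono[OF assms(1), of j d] in_Delta_antimono[OF assms(1), of 1 j] assms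
  by (auto simp: in_Delta_def)

lemma in_Delta_comp_mono:
  assumes "in_Delta d w" "mono h" "h 1 \<le> 1" "0 \<le> h 0"
  shows "in_Delta d (\<lambda>j. h (w j))"
proof -
  have "h (w 1) \<le> h 1" "h 0 \<le> h (w d)" if "d \<ge> 1"
    using assms(1) that monoD[OF assms(2)] by (auto simp: in_Delta_def)
  then show ?thesis
    using assms monoD[OF assms(2)] by (force simp: in_Delta_def)
qed

lemma Tmap_eq:
  "j \<le> d \<Longrightarrow> Tmap d w j =
     (if j = 0 then 1 else w j) - (if Suc j \<le> d then w (Suc j) else 0)"
  by (simp add: Tmap_def Let_def)

lemma sum_Tmap: "(\<Sum>j = 0..d. Tmap d w j) = 1"
proof -
  define ze where "ze = (\<lambda>j. if j = 0 then 1 else if j \<le> d then w j else (0::real))"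
  have "(\<Sum>j = 0..d. Tmap d w j) = (\<Sum>j = 0..d. ze j - ze (Suc j))"
    by (rule sum.cong) (auto simp: Tmap_def Let_def ze_def)
  also have "\<dots> = 1" by (subst sum_diff_Suc_telescope) (auto simp: ze_def)
  finally show ?thesis .
qed

lemma Tinv_Tmap: "j \<in> {1..d} \<Longrightarrow> Tinv d (Tmap d w) j = w j"
proof -
  assume j: "j \<in> {1..d}"
  define ze where "ze = (\<lambda>j. if j = 0 then 1 else if j \<le> d then w j else (0::real))"
  have "Tinv d (Tmap d w) j = (\<Sum>k = j..d. ze k - ze (Suc k))"
    using j by (auto simp: Tinv_def Tmap_def Let_def ze_def intro!: sum.cong)
  also have "\<dots> = w j" using j by (subst sum_diff_Suc_telescope) (auto simp: ze_def)
  finally show ?thesis .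
qed

lemma Tmap_Tinv:
  assumes "(\<Sum>k = 0..d. lam k) = 1" "j \<le> d"
  shows "Tmap d (Tinv d lam) j = lam j"
proof -
  have split: "(\<Sum>k = j..d. lam k) = lam j + (\<Sum>k = Suc j..d. lam k)" if "j \<le> d" for j
    using sum.atLeast_Suc_atMost[OF that] by simp
  show ?thesis
    using assms split[of j] split[of 0] by (auto simp: Tmap_def Tinv_def Let_def)
qed

lemma Pmul_eq:
  assumes "inverse_perms d s t" "j \<le> d"
  shows "Pmul d s lam j = lam (t j)"
proof -
  have iff: "j = s k \<longleftrightarrow> k = t j" if "k \<le> d" for k
    using inverse_permsD[OF assms(1) that] inverse_permsD[OF assms] by metis
  have "Pmul d s lam j = (\<Sum>k = 0..d. (if j = s k then 1 else 0) * lam k)"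
    unfolding Pmul_def using assms(2) by simp
  also have "\<dots> = (\<Sum>k = 0..d. if k = t j then lam k else 0)"
    by (rule sum.cong) (auto simp: iff)
  also have "\<dots> = lam (t j)" using inverse_permsD[OF assms] by (simp add: sum.delta)
  finally show ?thesis .
qed

lemma Tmap_Lblock:
  assumes "inverse_perms d s t" "k \<le> d"
  shows "Tmap d (Lblock d s w) k = Tmap d w (t k)"
proof -
  have "(\<Sum>k = 0..d. Pmul d s (Tmap d w) k) = (\<Sum>k = 0..d. Tmap d w (t k))"
    using Pmul_eq[OF assms(1)] by simp
  also have "\<dots> = (\<Sum>k = 0..d. Tmap d w k)"
    by (rule sum.reindex_bij_witness[where i=s and j=t]) (use inverse_permsD[OF assms(1)] in auto)
  finally have "(\<Sum>k = 0..d. Pmul d s (Tmap d w) k) = 1" by (simp add: sum_Tmap)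
  then show ?thesis unfolding Lblock_def by (simp add: Tmap_Tinv assms Pmul_eq)
qed

lemma Lblock_inverse:
  assumes "inverse_perms d s t" "j \<in> {1..d}"
  shows "Lblock d t (Lblock d s w) j = w j"
proof -
  have "Pmul d t (Tmap d (Lblock d s w)) k = Tmap d w k" if "k \<le> d" for k
    using that Pmul_eq[OF inverse_perms_sym[OF assms(1)] that] Tmap_Lblock[OF assms(1)]
      inverse_permsD[OF assms(1) that] by simp
  then have "Lblock d t (Lblock d s w) j = Tinv d (Tmap d w) j"
    unfolding Lblock_def[of d t] Tinv_def by simp
  then show ?thesis using Tinv_Tmap[OF assms(2)] by simp
qed

lemma in_Delta_iff_Tmap_nonneg:
  assumes "1 \<le> d"
  shows "in_Delta d w \<longleftrightarrow> (\<forall>j\<le>d. 0 \<le> Tmap d w j)"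
proof
  assume w: "in_Delta d w"
  show "\<forall>j\<le>d. 0 \<le> Tmap d w j"
  proof (intro allI impI)
    fix j assume "j \<le> d"
    then consider "j = 0" | "j \<in> {1..<d}" | "j = d" by fastforce
    then show "0 \<le> Tmap d w j"
      by cases (use w assms in \<open>simp_all add: Tmap_eq in_Delta_def\<close>)
  qed
next
  assume h: "\<forall>j\<le>d. 0 \<le> Tmap d w j"
  have "w (Suc j) \<le> w j" if "j \<in> {1..<d}" for j
    using h[rule_format, of j] that by (simp add: Tmap_eq)
  moreover have "w 1 \<le> 1" "0 \<le> w d"
    using h[rule_format, of 0] h[rule_format, of d] assms by (simp_all add: Tmap_eq)
  ultimately show "in_Delta d w" by (simp add: in_Delta_def)
qed

lemma in_Delta_Lblock_iff:
  assumes "inverse_perms d s t" "1 \<le> d"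
  shows "in_Delta d (Lblock d s w) \<longleftrightarrow> in_Delta d w"
proof -
  have "in_Delta d (Lblock d s w) \<longleftrightarrow> (\<forall>j\<le>d. 0 \<le> Tmap d w (t j))"
    using in_Delta_iff_Tmap_nonneg[OF assms(2)] Tmap_Lblock[OF assms(1)] by auto
  also have "\<dots> \<longleftrightarrow> (\<forall>k\<le>d. 0 \<le> Tmap d w k)"
    using inverse_permsD[OF assms(1)] by metis
  finally show ?thesis using in_Delta_iff_Tmap_nonneg[OF assms(2)] by simp
qed

lemma Lblock_convex_comb:
  "Lblock d s (\<lambda>j. (1 - u) * a j + u * b j) j = (1 - u) * Lblock d s a j + u * Lblock d s b j"
proof -
  have "Tmap d (\<lambda>j. (1 - u) * a j + u * b j) = (\<lambda>k. (1 - u) * Tmap d a k + u * Tmap d b k)"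
    by (auto simp: Tmap_def Let_def algebra_simps)
  moreover have "Pmul d s (\<lambda>k. (1 - u) * A k + u * B k) = (\<lambda>k. (1 - u) * Pmul d s A k + u * Pmul d s B k)"
    for A B
  proof -
    have "e * ((1 - u) * x + u * y) = (1 - u) * (e * x) + u * (e * y)" for e x y :: real
      by algebra
    then show ?thesis by (simp add: Pmul_def fun_eq_iff sum.distrib sum_distrib_left)
  qed
  moreover have "Tinv d (\<lambda>k. (1 - u) * A k + u * B k) j = (1 - u) * Tinv d A j + u * Tinv d B j"
    for A B by (simp add: Tinv_def sum.distrib sum_distrib_left)
  ultimately show ?thesis by (simp add: Lblock_def)
qed

lemma Tmap_step:
  assumes "k \<le> d" "m \<le> d"
  shows "Tmap d (\<lambda>j. of_bool (j \<le> k)) m = of_bool (m = k)"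
  using assms by (cases "m = 0") (auto simp: Tmap_eq)

lemma Lblock_step:
  assumes "inverse_perms d s t" "k \<le> d" "j \<in> {1..d}"
  shows "Lblock d s (\<lambda>j. of_bool (j \<le> k)) j = of_bool (j \<le> s k)"
proof -
  have "Pmul d s (Tmap d (\<lambda>j. of_bool (j \<le> k))) m = of_bool (m = s k)" if "m \<le> d" for m
  proof -
    have "t m = k \<longleftrightarrow> m = s k"
      using inverse_permsD[OF assms(1)] that assms(2) by metis
    then show ?thesis
      using Pmul_eq[OF assms(1) that] Tmap_step[OF assms(2) inverse_permsD(2)[OF assms(1) that]]
      by simp
  qed
  then have "Lblock d s (\<lambda>j. of_bool (j \<le> k)) j = (\<Sum>m = j..d. of_bool (m = s k))"
    using assms(3) by (simp add: Lblock_def Tinv_def)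
  also have "\<dots> = of_bool (j \<le> s k)"
    using inverse_permsD[OF assms(1,2)] assms(3) by (simp add: sum.delta of_bool_def)
  finally show ?thesis .
qed

lemma Lblock_cong: "(\<And>j. j \<in> {1..d} \<Longrightarrow> a j = b j) \<Longrightarrow> Lblock d s a = Lblock d s b"
proof -
  assume "\<And>j. j \<in> {1..d} \<Longrightarrow> a j = b j"
  then have "Tmap d a = Tmap d b" by (auto simp: Tmap_def Let_def fun_eq_iff)
  then show ?thesis by (simp add: Lblock_def)
qed

section \<open>Staircases\<close>

abbreviation total_dim :: "nat \<Rightarrow> (nat \<Rightarrow> nat) \<Rightarrow> nat" where
  "total_dim n d \<equiv> \<Sum>i\<in>{1..n}. d i"

definition cells :: "nat \<Rightarrow> (nat \<Rightarrow> nat) \<Rightarrow> (nat \<times> nat) set" where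
  "cells n d = Sigma {1..n} (\<lambda>i. {1..d i})"

text \<open>The right-hand side of the inequality of \<^const>\<open>E_relax\<close> indexed by the staircase
  \<open>\<pi>\<close>, as a function of \<open>z'\<close>.\<close>

definition stair_affine ::
  "nat \<Rightarrow> (nat \<Rightarrow> nat) \<Rightarrow> ((nat \<Rightarrow> nat) \<Rightarrow> real) \<Rightarrow> (nat \<Rightarrow> nat \<times> nat) \<Rightarrow> (nat \<Rightarrow> nat \<Rightarrow> real) \<Rightarrow> real"
where
  "stair_affine n d Ps \<pi> w = Ps (jpt \<pi> 0) +
     (\<Sum>t\<in>{1..total_dim n d}. (Ps (jpt \<pi> t) - Ps (jpt \<pi> (t - 1))) * w (fst (\<pi> t)) (snd (\<pi> t)))"

lemma finite_cells [simp]: "finite (cells n d)"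
  by (simp add: cells_def)

lemma card_cells: "card (cells n d) = total_dim n d"
  by (simp add: cells_def card_SigmaI)

lemma jpt_eq_card: "jpt \<pi> t i = card {s\<in>{1..t}. fst (\<pi> s) = i}"
proof (induction t)
  case (Suc t)
  have "{s\<in>{1..Suc t}. fst (\<pi> s) = i} =
        {s\<in>{1..t}. fst (\<pi> s) = i} \<union> (if fst (\<pi> (Suc t)) = i then {Suc t} else {})"
    by (auto simp: le_Suc_eq)
  then show ?case using Suc by (simp add: card_insert_if)
qed simp

lemma jpt_mono: "s \<le> t \<Longrightarrow> jpt \<pi> s i \<le> jpt \<pi> t i"
  unfolding jpt_eq_card by (rule card_mono) auto

lemma staircaseD:
  assumes "staircase n d \<pi>"
  shows "t \<in> {1..total_dim n d} \<Longrightarrow> fst (\<pi> t) \<in> {1..n}"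
    and "i \<in> {1..n} \<Longrightarrow> jpt \<pi> (total_dim n d) i = d i"
    and "t \<in> {1..total_dim n d} \<Longrightarrow> snd (\<pi> t) = jpt \<pi> t (fst (\<pi> t))"
  using assms unfolding staircase_def Let_def jpt_eq_card by blast+

lemma jpt_le_dim:
  assumes "staircase n d \<pi>" "t \<le> total_dim n d" "i \<in> {1..n}"
  shows "jpt \<pi> t i \<le> d i"
  using jpt_mono[OF assms(2)] staircaseD(2)[OF assms(1,3)] by metis

lemma staircase_cell:
  assumes "staircase n d \<pi>" "t \<in> {1..total_dim n d}"
  shows "\<pi> t \<in> cells n d"
proof -
  obtain s where t: "t = Suc s" using assms(2) by (cases t) auto
  have "snd (\<pi> t) = jpt \<pi> t (fst (\<pi> t))" by (rule staircaseD(3)[OF assms])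
  moreover have "jpt \<pi> t (fst (\<pi> t)) \<le> d (fst (\<pi> t))"
    using jpt_le_dim[OF assms(1)] staircaseD(1)[OF assms] assms(2) by simp
  moreover have "1 \<le> jpt \<pi> t (fst (\<pi> t))" using t by simp
  ultimately show ?thesis
    using staircaseD(1)[OF assms] by (cases "\<pi> t") (auto simp: cells_def)
qed

lemma card_sublevel_ge_iff:
  fixes g :: "nat \<Rightarrow> nat"
  assumes g: "strict_mono_on {1..D} g" and j: "j \<in> {1..D}"
  shows "j \<le> card {k\<in>{1..D}. g k \<le> t} \<longleftrightarrow> g j \<le> t"
proof
  assume gj: "g j \<le> t"
  have "{1..j} \<subseteq> {k\<in>{1..D}. g k \<le> t}"
    using j gj strict_mono_on_leD[OF g] by fastforce
  from card_mono[OF _ this] show "j \<le> card {k\<in>{1..D}. g k \<le> t}" by simp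
next
  assume le: "j \<le> card {k\<in>{1..D}. g k \<le> t}"
  show "g j \<le> t"
  proof (rule ccontr)
    assume "\<not> g j \<le> t"
    then have "{k\<in>{1..D}. g k \<le> t} \<subseteq> {1..j - 1}"
      using j strict_mono_on_less_eq[OF g] by fastforce
    from card_mono[OF _ this] le j show False by simp arith
  qed
qed

lemma enumeration_inverse:
  assumes "bij_betw \<pi> {1..N} C" "\<forall>t\<in>{1..N}. pos (\<pi> t) = t" "q \<in> C"
  shows "pos q \<in> {1..N}" "\<pi> (pos q) = q"
proof -
  have "q \<in> \<pi> ` {1..N}" using assms by (simp add: bij_betw_def)
  then obtain s where "s \<in> {1..N}" "q = \<pi> s" by blast
  then show "pos q \<in> {1..N}" "\<pi> (pos q) = q" using assms(2) by auto
qed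

context
  fixes n :: nat and d :: "nat \<Rightarrow> nat" and \<pi> :: "nat \<Rightarrow> nat \<times> nat" and pos :: "nat \<times> nat \<Rightarrow> nat"
  assumes bij: "bij_betw \<pi> {1..total_dim n d} (cells n d)"
    and pos: "\<forall>t\<in>{1..total_dim n d}. pos (\<pi> t) = t"
    and incr: "\<forall>i\<in>{1..n}. strict_mono_on {1..d i} (\<lambda>j. pos (i, j))"
begin

lemma block_increasing_jpt_eq:
  assumes "t \<le> total_dim n d" "i \<in> {1..n}"
  shows "jpt \<pi> t i = card {j\<in>{1..d i}. pos (i, j) \<le> t}"
proof -
  have "{s\<in>{1..t}. fst (\<pi> s) = i} = (\<lambda>j. pos (i, j)) ` {j\<in>{1..d i}. pos (i, j) \<le> t}"
  proof (intro equalityI subsetI)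
    fix s assume s: "s \<in> {s\<in>{1..t}. fst (\<pi> s) = i}"
    then have "\<pi> s \<in> cells n d" "pos (\<pi> s) = s"
      using assms(1) bij_betw_apply[OF bij] pos by auto
    then show "s \<in> (\<lambda>j. pos (i, j)) ` {j\<in>{1..d i}. pos (i, j) \<le> t}"
      using s by (cases "\<pi> s") (force simp: cells_def)
  next
    fix s assume "s \<in> (\<lambda>j. pos (i, j)) ` {j\<in>{1..d i}. pos (i, j) \<le> t}"
    then obtain j where "j \<in> {1..d i}" "pos (i, j) \<le> t" "s = pos (i, j)" by blast
    moreover have "(i, j) \<in> cells n d" using assms(2) \<open>j \<in> {1..d i}\<close> by (simp add: cells_def)
    ultimately show "s \<in> {s\<in>{1..t}. fst (\<pi> s) = i}"
      using enumeration_inverse[OF bij pos] by auto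
  qed
  moreover have "inj_on (\<lambda>j. pos (i, j)) {j\<in>{1..d i}. pos (i, j) \<le> t}"
    using strict_mono_on_imp_inj_on[OF incr[rule_format, OF assms(2)]] by (rule inj_on_subset) auto
  ultimately show ?thesis by (simp add: jpt_eq_card card_image)
qed

lemma block_increasing_jpt_ge_iff:
  assumes "t \<le> total_dim n d" "(i, j) \<in> cells n d"
  shows "j \<le> jpt \<pi> t i \<longleftrightarrow> pos (i, j) \<le> t"
  using assms block_increasing_jpt_eq card_sublevel_ge_iff[OF incr[rule_format]]
  by (auto simp: cells_def)

lemma block_increasing_staircase: "staircase n d \<pi>"
proof -
  have "jpt \<pi> (total_dim n d) i = d i" if "i \<in> {1..n}" for i
  proof -
    have "{j\<in>{1..d i}. pos (i, j) \<le> total_dim n d} = {1..d i}"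
      using enumeration_inverse[OF bij pos] that by (auto simp: cells_def)
    then show ?thesis using block_increasing_jpt_eq[OF _ that] by simp
  qed
  moreover have "snd (\<pi> t) = jpt \<pi> t (fst (\<pi> t))" if t: "t \<in> {1..total_dim n d}" for t
  proof -
    obtain i j where ij: "\<pi> t = (i, j)" and c: "(i, j) \<in> cells n d"
      using bij_betw_apply[OF bij t] by (cases "\<pi> t") auto
    have "t = pos (i, j)" using pos t ij by metis
    then have "{k\<in>{1..d i}. pos (i, k) \<le> t} = {1..j}"
      using c strict_mono_on_less_eq[OF incr[rule_format]] by (auto simp: cells_def)
    then show ?thesis using block_increasing_jpt_eq[of t i] t ij c by (simp add: cells_def)
  qed
  moreover have "fst (\<pi> t) \<in> {1..n}" if "t \<in> {1..total_dim n d}" for t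
    using bij_betw_apply[OF bij that] by (auto simp: cells_def)
  ultimately show ?thesis
    unfolding staircase_def Let_def jpt_eq_card[symmetric] by simp
qed

end

lemma sorted_enumeration:
  fixes key :: "'a \<Rightarrow> 'b::linorder"
  assumes "finite A" "inj_on key A"
  obtains e where "bij_betw e {1..card A} A" "strict_mono_on {1..card A} (key \<circ> e)"
proof
  define ys where "ys = sorted_list_of_set (key ` A)"
  have len: "length ys = card A"
    using assms by (simp add: ys_def card_image)
  have ys: "distinct ys" "set ys = key ` A" "sorted_wrt (<) ys"
    using assms(1) by (simp_all add: ys_def strict_sorted_list_of_set)
  have shift: "bij_betw (\<lambda>t. t - 1) {1..card A} {..<length ys}"
    unfolding len by (rule bij_betw_byWitness[where f'=Suc]) auto
  have "bij_betw (inv_into A key \<circ> (!) ys \<circ> (\<lambda>t. t - 1)) {1..card A} A"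
    using bij_betw_trans[OF shift bij_betw_trans[OF bij_betw_nth[OF ys(1) refl ys(2)[symmetric]]
      bij_betw_inv_into[OF inj_on_imp_bij_betw[OF assms(2)]]]] by (simp add: comp_assoc)
  then show "bij_betw (\<lambda>t. inv_into A key (ys ! (t - 1))) {1..card A} A"
    by (simp add: comp_def)
  show "strict_mono_on {1..card A} (key \<circ> (\<lambda>t. inv_into A key (ys ! (t - 1))))"
  proof (rule strict_mono_onI)
    fix s t assume st: "s \<in> {1..card A}" "t \<in> {1..card A}" "s < t"
    then have "ys ! (s - 1) \<in> key ` A" "ys ! (t - 1) \<in> key ` A"
      using ys(2) len nth_mem[of "s - 1" ys] nth_mem[of "t - 1" ys] by auto
    with st show "(key \<circ> (\<lambda>t. inv_into A key (ys ! (t - 1)))) s < (key \<circ> (\<lambda>t. inv_into A key (ys ! (t - 1)))) t"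
      using ys len sorted_wrt_nth_less[OF ys(3), of "s - 1" "t - 1"]
      by (simp add: f_inv_into_f)
  qed
qed

definition sorting_staircase ::
  "nat \<Rightarrow> (nat \<Rightarrow> nat) \<Rightarrow> (nat \<Rightarrow> nat \<Rightarrow> real) \<Rightarrow> (nat \<Rightarrow> nat \<times> nat) \<Rightarrow> (nat \<times> nat \<Rightarrow> nat) \<Rightarrow> bool"
where
  "sorting_staircase n d w \<pi> pos \<longleftrightarrow> staircase n d \<pi> \<and>
     bij_betw \<pi> {1..total_dim n d} (cells n d) \<and>
     (\<forall>t\<in>{1..total_dim n d}. pos (\<pi> t) = t) \<and>
     (\<forall>s\<in>{1..total_dim n d}. \<forall>t\<in>{1..total_dim n d}. s \<le> t \<longrightarrow>
        w (fst (\<pi> t)) (snd (\<pi> t)) \<le> w (fst (\<pi> s)) (snd (\<pi> s))) \<and>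
     (\<forall>t\<le>total_dim n d. \<forall>(i, j)\<in>cells n d. j \<le> jpt \<pi> t i \<longleftrightarrow> pos (i, j) \<le> t)"

lemma sorting_staircase_exists:
  assumes w: "\<forall>i\<in>{1..n}. in_Delta (d i) (w i)"
  shows "\<exists>\<pi> pos. sorting_staircase n d w \<pi> pos"
proof -
  let ?N = "total_dim n d"
  \<comment> \<open>lexicographic: decreasing \<open>w\<close>, then increasing \<open>j\<close>, which keeps every block in order\<close>
  define key where "key = (\<lambda>(i, j). [- w i j, real j, real i])"
  have "inj_on key (cells n d)" by (rule inj_onI) (auto simp: key_def)
  then obtain \<pi> where bij: "bij_betw \<pi> {1..?N} (cells n d)"
    and sorted: "strict_mono_on {1..?N} (key \<circ> \<pi>)"
    using sorted_enumeration[of "cells n d" key] by (auto simp: card_cells)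
  define pos where "pos = inv_into {1..?N} \<pi>"
  have pos: "\<forall>t\<in>{1..?N}. pos (\<pi> t) = t"
    using bij by (simp add: pos_def bij_betw_inv_into_left)
  have key_le: "key (\<pi> s) \<le> key (\<pi> t) \<longleftrightarrow> s \<le> t" if "s \<in> {1..?N}" "t \<in> {1..?N}" for s t
    using strict_mono_on_less_eq[OF sorted that] by simp
  have incr: "\<forall>i\<in>{1..n}. strict_mono_on {1..d i} (\<lambda>j. pos (i, j))"
  proof (intro ballI strict_mono_onI)
    fix i j j' assume i: "i \<in> {1..n}" and jj: "j \<in> {1..d i}" "j' \<in> {1..d i}" "j < j'"
    then have "(i, j) \<in> cells n d" "(i, j') \<in> cells n d" using i by (auto simp: cells_def)
    moreover have "key (i, j) < key (i, j')"
      using in_Delta_antimono[OF w[rule_format, OF i], of j j'] jj by (auto simp: key_def)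
    ultimately show "pos (i, j) < pos (i, j')"
      using key_le enumeration_inverse[OF bij pos] by (metis leD leI)
  qed
  have "w (fst (\<pi> t)) (snd (\<pi> t)) \<le> w (fst (\<pi> s)) (snd (\<pi> s))"
    if "s \<in> {1..?N}" "t \<in> {1..?N}" "s \<le> t" for s t
    using key_le[OF that(1,2)] that(3) by (cases "\<pi> s", cases "\<pi> t") (auto simp: key_def)
  then have "sorting_staircase n d w \<pi> pos"
    using block_increasing_staircase[OF bij pos incr] block_increasing_jpt_ge_iff[OF bij pos incr]
      bij pos unfolding sorting_staircase_def by blast
  then show ?thesis by blast
qed

lemma sorting_staircase_comp_mono:
  "sorting_staircase n d w \<pi> pos \<Longrightarrow> mono h \<Longrightarrow> sorting_staircase n d (\<lambda>i j. h (w i j)) \<pi> pos"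
  unfolding sorting_staircase_def mono_def by blast

section \<open>Staircase bounds of a supermodular grid function\<close>

lemma stair_affine_cong:
  assumes "staircase n d \<pi>" "\<forall>(i, j)\<in>cells n d. a i j = b i j"
  shows "stair_affine n d Ps \<pi> a = stair_affine n d Ps \<pi> b"
  unfolding stair_affine_def
proof (rule arg_cong[where f="\<lambda>x. Ps (jpt \<pi> 0) + x"], rule sum.cong[OF refl])
  fix t assume "t \<in> {1..total_dim n d}"
  then have "\<pi> t \<in> cells n d" by (rule staircase_cell[OF assms(1)])
  then have "a (fst (\<pi> t)) (snd (\<pi> t)) = b (fst (\<pi> t)) (snd (\<pi> t))"
    using assms(2) by (cases "\<pi> t") auto
  then show "(Ps (jpt \<pi> t) - Ps (jpt \<pi> (t - 1))) * a (fst (\<pi> t)) (snd (\<pi> t)) =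
      (Ps (jpt \<pi> t) - Ps (jpt \<pi> (t - 1))) * b (fst (\<pi> t)) (snd (\<pi> t))" by simp
qed

lemma stair_affine_convex:
  fixes lam :: "'a \<Rightarrow> real"
  assumes st: "staircase n d \<pi>" and "finite T" "(\<Sum>k\<in>T. lam k) = 1"
    and w: "\<forall>(i, j)\<in>cells n d. w i j = (\<Sum>k\<in>T. lam k * B k i j)"
  shows "stair_affine n d Ps \<pi> w = (\<Sum>k\<in>T. lam k * stair_affine n d Ps \<pi> (B k))"
proof -
  let ?b = "\<lambda>t. Ps (jpt \<pi> t) - Ps (jpt \<pi> (t - 1))"
  have "(\<Sum>k\<in>T. lam k * stair_affine n d Ps \<pi> (B k)) =
      (\<Sum>k\<in>T. lam k) * Ps (jpt \<pi> 0) +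
      (\<Sum>t\<in>{1..total_dim n d}. ?b t * (\<Sum>k\<in>T. lam k * B k (fst (\<pi> t)) (snd (\<pi> t))))"
    by (simp add: stair_affine_def algebra_simps sum.distrib sum_distrib_left sum_distrib_right
        sum.swap[of _ T])
  also have "\<dots> = stair_affine n d Ps \<pi> (\<lambda>i j. \<Sum>k\<in>T. lam k * B k i j)"
    using assms(3) by (simp add: stair_affine_def)
  also have "\<dots> = stair_affine n d Ps \<pi> w"
    by (rule stair_affine_cong[OF st]) (use w in auto)
  finally show ?thesis ..
qed

lemma stair_affine_convex_comb:
  "stair_affine n d Ps \<pi> (\<lambda>i j. (1 - u) * a i j + u * b i j) =
     (1 - u) * stair_affine n d Ps \<pi> a + u * stair_affine n d Ps \<pi> b"
proof -
  have "c * ((1 - u) * x + u * y) = (1 - u) * (c * x) + u * (c * y)" for c x y :: real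
    by algebra
  then show ?thesis
    by (simp add: stair_affine_def sum.distrib flip: sum_distrib_left) (simp add: algebra_simps)
qed

lemma stair_affine_restrict:
  "stair_affine n d Ps (restrict \<pi> {1..total_dim n d}) w = stair_affine n d Ps \<pi> w"
proof -
  have "jpt (restrict \<pi> {1..total_dim n d}) t = jpt \<pi> t" if "t \<le> total_dim n d" for t
    using that by (induction t) auto
  then show ?thesis unfolding stair_affine_def by (auto intro!: sum.cong)
qed

lemma sum_step_telescope:
  fixes q :: "nat \<Rightarrow> real"
  assumes "K \<le> D"
  shows "q 0 + (\<Sum>j = 1..D. (q j - q (j - 1)) * of_bool (j \<le> K)) = q K"
proof -
  have "(\<Sum>j = 1..D. (q j - q (j - 1)) * of_bool (j \<le> K)) = (\<Sum>j = 1..D. if j \<le> K then q j - q (j - 1) else 0)"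
    by (rule sum.cong) auto
  also have "\<dots> = (\<Sum>j\<in>{j\<in>{1..D}. j \<le> K}. q j - q (j - 1))"
    by (rule sum.inter_filter[symmetric]) simp
  also have "{j\<in>{1..D}. j \<le> K} = {Suc 0..K}" using assms by auto
  finally show ?thesis using sum_telescope''[of 0 K q] by simp
qed

lemma stair_affine_step_jpt:
  assumes st: "staircase n d \<pi>" and m: "m \<le> total_dim n d"
  shows "stair_affine n d Ps \<pi> (\<lambda>i j. of_bool (j \<le> jpt \<pi> m i)) = Ps (jpt \<pi> m)"
proof -
  have "of_bool (snd (\<pi> t) \<le> jpt \<pi> m (fst (\<pi> t))) = (of_bool (t \<le> m) :: real)"
    if t: "t \<in> {1..total_dim n d}" for t
  proof -
    let ?i = "fst (\<pi> t)"
    have snd: "snd (\<pi> t) = Suc (jpt \<pi> (t - 1) ?i)"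
      using staircaseD(3)[OF st t] t by (cases t) auto
    show ?thesis
    proof (cases "t \<le> m")
      case True
      then show ?thesis using staircaseD(3)[OF st t] jpt_mono[OF True, of \<pi> ?i] by simp
    next
      case False
      then have "m \<le> t - 1" by simp
      then show ?thesis using False snd jpt_mono[of m "t - 1" \<pi> ?i] by simp
    qed
  qed
  then have "stair_affine n d Ps \<pi> (\<lambda>i j. of_bool (j \<le> jpt \<pi> m i)) =
      Ps (jpt \<pi> 0) + (\<Sum>t = 1..total_dim n d. (Ps (jpt \<pi> t) - Ps (jpt \<pi> (t - 1))) * of_bool (t \<le> m))"
    unfolding stair_affine_def by (intro arg_cong[where f="\<lambda>x. Ps (jpt \<pi> 0) + x"] sum.cong) auto
  also have "\<dots> = Ps (jpt \<pi> m)"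
    by (rule sum_step_telescope[OF m])
  finally show ?thesis .
qed

lemma abel_summation:
  fixes c ps :: "nat \<Rightarrow> real"
  shows "ps 0 * c 0 + (\<Sum>t = 1..N. (ps t - ps (t - 1)) * c t)
       = (\<Sum>t = 0..N. (c t - c (Suc t)) * ps t) + c (Suc N) * ps N"
  by (induction N) (simp_all add: algebra_simps)

text \<open>For a sorting staircase, the successive differences of these coefficients are the
  weights that write \<open>w\<close> as a convex combination of the step functions of the grid points
  \<^term>\<open>jpt \<pi> t\<close>.\<close>

definition chain_coeff :: "nat \<Rightarrow> (nat \<Rightarrow> nat) \<Rightarrow> (nat \<Rightarrow> nat \<Rightarrow> real) \<Rightarrow> (nat \<Rightarrow> nat \<times> nat) \<Rightarrow> nat \<Rightarrow> real"
where
  "chain_coeff n d w \<pi> t =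
     (if t = 0 then 1 else if t \<le> total_dim n d then w (fst (\<pi> t)) (snd (\<pi> t)) else 0)"

context
  fixes n :: nat and d :: "nat \<Rightarrow> nat" and w :: "nat \<Rightarrow> nat \<Rightarrow> real"
    and \<pi> :: "nat \<Rightarrow> nat \<times> nat" and pos :: "nat \<times> nat \<Rightarrow> nat"
  assumes w: "\<forall>i\<in>{1..n}. in_Delta (d i) (w i)" and sorting: "sorting_staircase n d w \<pi> pos"
begin

private abbreviation (input) "N \<equiv> total_dim n d"

private abbreviation (input) "c \<equiv> chain_coeff n d w \<pi>"

lemma sorting_staircaseD:
  "staircase n d \<pi>" "bij_betw \<pi> {1..N} (cells n d)" "\<forall>t\<in>{1..N}. pos (\<pi> t) = t"
  "s \<in> {1..N} \<Longrightarrow> t \<in> {1..N} \<Longrightarrow> s \<le> t \<Longrightarrow> w (fst (\<pi> t)) (snd (\<pi> t)) \<le> w (fst (\<pi> s)) (snd (\<pi> s))"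
  "t \<le> N \<Longrightarrow> (i, j) \<in> cells n d \<Longrightarrow> j \<le> jpt \<pi> t i \<longleftrightarrow> pos (i, j) \<le> t"
  using sorting unfolding sorting_staircase_def by blast+

lemma chain_coeff_bounds: "0 \<le> c t" "c t \<le> 1"
proof -
  have "0 \<le> c t \<and> c t \<le> 1"
  proof (cases "t \<in> {1..N}")
    case True
    then have "\<pi> t \<in> cells n d" by (rule bij_betw_apply[OF sorting_staircaseD(2)])
    then show ?thesis
      using True w in_Delta_bounds[of "d (fst (\<pi> t))" "w (fst (\<pi> t))" "snd (\<pi> t)"]
      by (auto simp: chain_coeff_def cells_def)
  qed (auto simp: chain_coeff_def)
  then show "0 \<le> c t" "c t \<le> 1" by auto
qed

lemma chain_coeff_antimono: "t \<le> t' \<Longrightarrow> c t' \<le> c t"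
  using chain_coeff_bounds[of t] chain_coeff_bounds[of t'] sorting_staircaseD(4)[of t t']
  by (auto simp: chain_coeff_def)

lemma chain_coeff_pos: "(i, j) \<in> cells n d \<Longrightarrow> c (pos (i, j)) = w i j"
  using enumeration_inverse[OF sorting_staircaseD(2,3)] by (force simp: chain_coeff_def)

lemma chain_weights_sum: "(\<Sum>t = 0..N. c t - c (Suc t)) = 1"
  using sum_diff_Suc_telescope[of 0 N c] by (simp add: chain_coeff_def)

lemma chain_decomposition:
  assumes ij: "(i, j) \<in> cells n d"
  shows "w i j = (\<Sum>t = 0..N. (c t - c (Suc t)) * of_bool (j \<le> jpt \<pi> t i))"
proof -
  have p: "pos (i, j) \<in> {1..N}" using enumeration_inverse[OF sorting_staircaseD(2,3) ij] by simp
  have "(\<Sum>t = 0..N. (c t - c (Suc t)) * of_bool (j \<le> jpt \<pi> t i)) =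
      (\<Sum>t = pos (i, j)..N. c t - c (Suc t))"
    using sorting_staircaseD(5)[OF _ ij] p
    by (simp add: of_bool_def if_distrib sum.If_cases Int_def)
       (intro sum.cong; auto)
  also have "\<dots> = w i j"
    using p chain_coeff_pos[OF ij] by (subst sum_diff_Suc_telescope) (auto simp: chain_coeff_def)
  finally show ?thesis ..
qed

lemma stair_affine_sorting_eq:
  "stair_affine n d Ps \<pi> w = (\<Sum>t = 0..N. (c t - c (Suc t)) * Ps (jpt \<pi> t))"
proof -
  have "stair_affine n d Ps \<pi> w =
      Ps (jpt \<pi> 0) * c 0 + (\<Sum>t = 1..N. (Ps (jpt \<pi> t) - Ps (jpt \<pi> (t - 1))) * c t)"
    unfolding stair_affine_def by (auto simp: chain_coeff_def intro!: sum.cong)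
  also have "\<dots> = (\<Sum>t = 0..N. (c t - c (Suc t)) * Ps (jpt \<pi> t)) + c (Suc N) * Ps (jpt \<pi> N)"
    by (rule abel_summation)
  finally show ?thesis by (simp add: chain_coeff_def)
qed

text \<open>The chain coefficients of a binary point drop from \<open>1\<close> to \<open>0\<close> at a single \<open>m\<close>.\<close>

lemma sorting_staircase_binary:
  assumes bin: "\<forall>(i, j)\<in>cells n d. w i j \<in> {0, 1}"
  shows "\<exists>m\<le>N. \<forall>(i, j)\<in>cells n d. w i j = of_bool (j \<le> jpt \<pi> m i)"
proof -
  have c_bin: "c t \<in> {0, 1}" for t
  proof (cases "t \<in> {1..N}")
    case True
    then have "\<pi> t \<in> cells n d" by (rule bij_betw_apply[OF sorting_staircaseD(2)])
    then show ?thesis using bin True by (cases "\<pi> t") (auto simp: chain_coeff_def)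
  qed (auto simp: chain_coeff_def)
  define m where "m = Max {t\<in>{0..N}. c t = 1}"
  have m: "m \<in> {t\<in>{0..N}. c t = 1}"
    unfolding m_def by (rule Max_in) (auto simp: chain_coeff_def intro!: exI[of _ 0])
  have c_step: "c t = of_bool (t \<le> m)" if "t \<le> N" for t
  proof (cases "t \<le> m")
    case True
    then show ?thesis using chain_coeff_antimono[OF True] chain_coeff_bounds[of t] m by simp
  next
    case False
    then have "c t \<noteq> 1" using that Max_ge[of "{t\<in>{0..N}. c t = 1}" t] by (force simp: m_def)
    then show ?thesis using c_bin[of t] False by auto
  qed
  have "w i j = of_bool (j \<le> jpt \<pi> m i)" if ij: "(i, j) \<in> cells n d" for i j
  proof -
    have "pos (i, j) \<le> N" using enumeration_inverse[OF sorting_staircaseD(2,3) ij] by simp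
    then show ?thesis
      using chain_coeff_pos[OF ij] c_step sorting_staircaseD(5)[OF _ ij] m by simp
  qed
  then show ?thesis using m by auto
qed

end

lemma binary_Delta_step_form:
  assumes "\<forall>i\<in>{1..n}. in_Delta (d i) (w i)" "\<forall>(i, j)\<in>cells n d. w i j \<in> {0, 1}"
  obtains g \<pi> where "staircase n d \<pi>" "\<forall>i\<in>{1..n}. g i \<le> d i"
    "\<forall>(i, j)\<in>cells n d. w i j = of_bool (j \<le> g i)" "stair_affine n d Ps \<pi> w = Ps g"
proof -
  obtain \<pi> pos where sorting: "sorting_staircase n d w \<pi> pos"
    using sorting_staircase_exists[OF assms(1)] by blast
  note st = sorting_staircaseD(1)[OF assms(1) sorting]
  obtain m where m: "m \<le> total_dim n d" "\<forall>(i, j)\<in>cells n d. w i j = of_bool (j \<le> jpt \<pi> m i)"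
    using sorting_staircase_binary[OF assms(1) sorting assms(2)] by blast
  have "stair_affine n d Ps \<pi> w = Ps (jpt \<pi> m)"
    using stair_affine_cong[OF st m(2)] stair_affine_step_jpt[OF st m(1)] by simp
  then show ?thesis using that[OF st _ m(2)] jpt_le_dim[OF st m(1)] by blast
qed

locale grid_supermodular =
  fixes n :: nat and d :: "nat \<Rightarrow> nat" and Ps :: "(nat \<Rightarrow> nat) \<Rightarrow> real"
  assumes supermodular: "\<forall>i\<in>{1..n}. a i \<le> d i \<and> b i \<le> d i \<Longrightarrow>
      Ps a + Ps b \<le> Ps (\<lambda>i. max (a i) (b i)) + Ps (\<lambda>i. min (a i) (b i))"
    and Ps_cong: "\<forall>i\<in>{1..n}. a i = b i \<Longrightarrow> Ps a = Ps b"
begin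

text \<open>The grid points \<open>min (jpt \<pi> t) g\<close> climb from \<open>0\<close> to \<open>g\<close> along \<open>\<pi>\<close>; by
  supermodularity each of their increments is at most the corresponding increment along \<open>\<pi>\<close>.\<close>

lemma Ps_min_jpt_increment:
  assumes st: "staircase n d \<pi>" and g: "\<forall>i\<in>{1..n}. g i \<le> d i" and t: "t \<in> {1..total_dim n d}"
  shows "Ps (\<lambda>i. min (jpt \<pi> t i) (g i)) - Ps (\<lambda>i. min (jpt \<pi> (t - 1) i) (g i))
    \<le> (Ps (jpt \<pi> t) - Ps (jpt \<pi> (t - 1))) * of_bool (snd (\<pi> t) \<le> g (fst (\<pi> t)))"
proof -
  let ?J = "jpt \<pi>" and ?i = "fst (\<pi> t)"
  obtain s where s: "t = Suc s" using t by (cases t) auto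
  have J: "?J t = (\<lambda>i. ?J s i + of_bool (i = ?i))" and k: "snd (\<pi> t) = Suc (?J s ?i)"
    using staircaseD(3)[OF st t] s by auto
  show ?thesis
  proof (cases "snd (\<pi> t) \<le> g ?i")
    case True
    have "(\<lambda>i. max (min (?J t i) (g i)) (?J s i)) = ?J t"
      "(\<lambda>i. min (min (?J t i) (g i)) (?J s i)) = (\<lambda>i. min (?J s i) (g i))"
      using True k by (auto simp: J fun_eq_iff simp del: jpt.simps)
    moreover have "\<forall>i\<in>{1..n}. min (?J t i) (g i) \<le> d i \<and> ?J s i \<le> d i"
      using g jpt_le_dim[OF st] t s by fastforce
    ultimately show ?thesis
      using supermodular[of "\<lambda>i. min (?J t i) (g i)" "?J s"] True s by simp
  next
    case False
    then have "(\<lambda>i. min (?J t i) (g i)) = (\<lambda>i. min (?J s i) (g i))"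
      using k by (auto simp: J fun_eq_iff simp del: jpt.simps)
    then show ?thesis using False s by simp
  qed
qed

lemma Ps_le_stair_affine_step:
  assumes st: "staircase n d \<pi>" and g: "\<forall>i\<in>{1..n}. g i \<le> d i"
  shows "Ps g \<le> stair_affine n d Ps \<pi> (\<lambda>i j. of_bool (j \<le> g i))"
proof -
  let ?N = "total_dim n d" and ?Y = "\<lambda>t i. min (jpt \<pi> t i) (g i)"
  have "Ps g = Ps (?Y ?N)"
    using g staircaseD(2)[OF st] by (intro Ps_cong) auto
  also have "\<dots> = Ps (?Y 0) + (\<Sum>t = 1..?N. Ps (?Y t) - Ps (?Y (t - 1)))"
    using sum_telescope''[of 0 ?N "\<lambda>t. Ps (?Y t)"] by simp
  also have "\<dots> \<le> Ps (jpt \<pi> 0) +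
      (\<Sum>t = 1..?N. (Ps (jpt \<pi> t) - Ps (jpt \<pi> (t - 1))) * of_bool (snd (\<pi> t) \<le> g (fst (\<pi> t))))"
  proof -
    have "Ps (?Y 0) = Ps (jpt \<pi> 0)" by simp
    moreover have "(\<Sum>t = 1..?N. Ps (?Y t) - Ps (?Y (t - 1))) \<le>
      (\<Sum>t = 1..?N. (Ps (jpt \<pi> t) - Ps (jpt \<pi> (t - 1))) * of_bool (snd (\<pi> t) \<le> g (fst (\<pi> t))))"
      using Ps_min_jpt_increment[OF st g] by (intro sum_mono) simp
    ultimately show ?thesis by linarith
  qed
  finally show ?thesis by (simp add: stair_affine_def)
qed

lemma stair_affine_sorting_le:
  assumes w: "\<forall>i\<in>{1..n}. in_Delta (d i) (w i)" and sorting: "sorting_staircase n d w \<pi> pos"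
    and st': "staircase n d \<pi>'"
  shows "stair_affine n d Ps \<pi> w \<le> stair_affine n d Ps \<pi>' w"
proof -
  let ?N = "total_dim n d" and ?lam = "\<lambda>t. chain_coeff n d w \<pi> t - chain_coeff n d w \<pi> (Suc t)"
  note facts = sorting_staircaseD[OF w sorting]
  have "stair_affine n d Ps \<pi> w = (\<Sum>t = 0..?N. ?lam t * Ps (jpt \<pi> t))"
    by (rule stair_affine_sorting_eq[OF w sorting])
  also have "\<dots> \<le> (\<Sum>t = 0..?N. ?lam t * stair_affine n d Ps \<pi>' (\<lambda>i j. of_bool (j \<le> jpt \<pi> t i)))"
    using Ps_le_stair_affine_step[OF st'] jpt_le_dim[OF facts(1)] chain_coeff_antimono[OF w sorting]
    by (intro sum_mono mult_left_mono) auto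
  also have "\<dots> = stair_affine n d Ps \<pi>' w"
    using chain_decomposition[OF w sorting] chain_weights_sum[OF w sorting]
    by (intro stair_affine_convex[OF st', symmetric]) auto
  finally show ?thesis .
qed

end

section \<open>Affine constraints\<close>

definition affine_on_space :: "nat \<Rightarrow> (nat \<Rightarrow> nat) \<Rightarrow> (pt \<Rightarrow> real) \<Rightarrow> bool" where
  "affine_on_space n d g \<longleftrightarrow> (\<exists>c b. \<forall>q\<in>mip_space n d. g q = lin_form n d c q + b)"

lemma affine_on_spaceI: "(\<And>q. q \<in> mip_space n d \<Longrightarrow> g q = lin_form n d c q + b) \<Longrightarrow> affine_on_space n d g"
  unfolding affine_on_space_def by blast

lemma affine_const: "affine_on_space n d (\<lambda>q. a)"
  by (rule affine_on_spaceI[where c="(\<lambda>_. 0, \<lambda>_ _. 0, 0)" and b=a]) (auto simp: lin_form_def)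

lemma affine_add:
  assumes "affine_on_space n d g" "affine_on_space n d h"
  shows "affine_on_space n d (\<lambda>q. g q + h q)"
proof -
  obtain cx cz cm b where g: "\<forall>q\<in>mip_space n d. g q = lin_form n d (cx, cz, cm) q + b"
    using assms(1) unfolding affine_on_space_def by auto
  obtain cx' cz' cm' b' where h: "\<forall>q\<in>mip_space n d. h q = lin_form n d (cx', cz', cm') q + b'"
    using assms(2) unfolding affine_on_space_def by auto
  show ?thesis
    by (rule affine_on_spaceI[where c="(\<lambda>i. cx i + cx' i, \<lambda>i j. cz i j + cz' i j, cm + cm')"])
       (use g h in \<open>auto simp: lin_form_def algebra_simps sum.distrib\<close>)
qed

lemma affine_scale:
  assumes "affine_on_space n d g"
  shows "affine_on_space n d (\<lambda>q. a * g q)"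
proof -
  obtain cx cz cm b where g: "\<forall>q\<in>mip_space n d. g q = lin_form n d (cx, cz, cm) q + b"
    using assms unfolding affine_on_space_def by auto
  show ?thesis
    by (rule affine_on_spaceI[where c="(\<lambda>i. a * cx i, \<lambda>i j. a * cz i j, a * cm)"])
       (use g in \<open>auto simp: lin_form_def algebra_simps sum_distrib_left\<close>)
qed

lemma affine_uminus: "affine_on_space n d g \<Longrightarrow> affine_on_space n d (\<lambda>q. - g q)"
  using affine_scale[of n d g "-1"] by simp

lemma affine_diff:
  "affine_on_space n d g \<Longrightarrow> affine_on_space n d h \<Longrightarrow> affine_on_space n d (\<lambda>q. g q - h q)"
  using affine_add[of n d g "\<lambda>q. - h q"] affine_uminus[of n d h] by simp

lemma affine_if:
  "affine_on_space n d g \<Longrightarrow> affine_on_space n d h \<Longrightarrow> affine_on_space n d (\<lambda>q. if P then g q else h q)"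
  by (cases P) simp_all

lemma affine_sum:
  "finite A \<Longrightarrow> \<forall>a\<in>A. affine_on_space n d (g a) \<Longrightarrow> affine_on_space n d (\<lambda>q. \<Sum>a\<in>A. g a q)"
  by (induction A rule: finite_induct) (simp_all add: affine_const affine_add)

lemma affine_vanishing:
  "\<forall>q\<in>mip_space n d. g q = 0 \<Longrightarrow> affine_on_space n d g"
  using affine_const[of n d 0] unfolding affine_on_space_def by simp

lemma affine_x: "affine_on_space n d (\<lambda>q. fst q i)"
proof (cases "i \<in> {1..n}")
  case True
  have "(\<Sum>k = 1..n. (if k = i then 1 else 0) * x k) = x i" for x :: "nat \<Rightarrow> real"
  proof -
    have "(\<Sum>k = 1..n. (if k = i then 1 else 0) * x k) = (\<Sum>k = 1..n. if k = i then x k else 0)"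
      by (rule sum.cong) auto
    then show ?thesis using True by (simp add: sum.delta)
  qed
  then show ?thesis
    by (intro affine_on_spaceI[where c="(\<lambda>k. if k = i then 1 else 0, \<lambda>_ _. 0, 0)" and b=0])
       (auto simp: lin_form_def)
qed (auto intro: affine_vanishing simp: mip_space_def)

lemma affine_z: "affine_on_space n d (\<lambda>q. fst (snd q) i j)"
proof (cases "i \<in> {1..n} \<and> j \<in> {1..d i}")
  case True
  have inner: "(\<Sum>l = 1..d k. (if k = i \<and> l = j then 1 else 0) * z k l) = (if k = i then z i j else 0)"
    for k and z :: "nat \<Rightarrow> nat \<Rightarrow> real"
  proof (cases "k = i")
    case True
    have "(\<Sum>l = 1..d k. (if k = i \<and> l = j then 1 else 0) * z k l) = (\<Sum>l = 1..d i. if l = j then z i l else 0)"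
      using True by (intro sum.cong) auto
    then show ?thesis using True \<open>i \<in> {1..n} \<and> j \<in> {1..d i}\<close> by (simp add: sum.delta)
  qed simp
  have "(\<Sum>k = 1..n. \<Sum>l = 1..d k. (if k = i \<and> l = j then 1 else 0) * z k l) = z i j"
    for z :: "nat \<Rightarrow> nat \<Rightarrow> real"
    using True by (simp only: inner) (simp add: sum.delta)
  then show ?thesis
    by (intro affine_on_spaceI[where c="(\<lambda>_. 0, \<lambda>k l. if k = i \<and> l = j then 1 else 0, 0)" and b=0])
       (auto simp: lin_form_def)
qed (auto intro: affine_vanishing simp: mip_space_def)

lemma affine_mu: "affine_on_space n d (\<lambda>q. snd (snd q))"
  by (rule affine_on_spaceI[where c="(\<lambda>_. 0, \<lambda>_ _. 0, 1)" and b=0]) (auto simp: lin_form_def)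

lemma affine_Tmap: "affine_on_space n d (\<lambda>q. Tmap D (fst (snd q) i) k)"
proof -
  have eq: "Tmap D (fst (snd q) i) k = (if k \<le> D then (if k = 0 then 1 else if k \<le> D then fst (snd q) i k else 0)
       - (if Suc k \<le> D then fst (snd q) i (Suc k) else 0) else 0)" for q
    by (simp add: Tmap_def Let_def)
  show ?thesis unfolding eq by (intro affine_if affine_diff affine_const affine_z)
qed

lemma affine_Lsig: "affine_on_space n d (\<lambda>q. Lsig n d s (fst (snd q)) i j)"
proof -
  have eq: "Lsig n d s (fst (snd q)) i j = (if i \<in> {1..n} then (if j \<in> {1..d i} then
      (\<Sum>k = j..d i. if k \<le> d i then (\<Sum>m = 0..d i. (if k = s i m then 1 else 0) * Tmap (d i) (fst (snd q) i) m) else 0)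
      else 0) else 0)" for q
    by (simp add: Lsig_def Tinv_def Pmul_def)
  show ?thesis unfolding eq
    by (intro affine_if affine_const affine_sum ballI finite_atLeastAtMost affine_scale affine_Tmap)
qed

lemma polyhedron_of_affine_le:
  assumes "finite G" "\<forall>g\<in>G. affine_on_space n d g"
  shows "polyhedron_in n d {q\<in>mip_space n d. \<forall>g\<in>G. g q \<le> 0}"
proof -
  obtain c b where cb: "\<forall>g\<in>G. \<forall>q\<in>mip_space n d. g q = lin_form n d (c g) q + b g"
    using assms(2) unfolding affine_on_space_def by metis
  define F where "F = (\<lambda>g. (c g, - b g)) ` G"
  have "{q\<in>mip_space n d. \<forall>g\<in>G. g q \<le> 0} = {q\<in>mip_space n d. \<forall>(c, b)\<in>F. lin_form n d c q \<le> b}"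
    using cb unfolding F_def by fastforce
  moreover have "finite F" using assms(1) by (simp add: F_def)
  ultimately show ?thesis unfolding polyhedron_in_def by blast
qed

section \<open>The maps \<open>L\<^sup>\<sigma>\<close>\<close>

lemma Lsig_block: "i \<in> {1..n} \<Longrightarrow> Lsig n d s z i = Lblock (d i) (s i) (z i)"
  by (simp add: Lsig_def Lblock_def)

lemma Lsig_outside: "(i, j) \<notin> cells n d \<Longrightarrow> Lsig n d s z i j = 0"
  by (auto simp: Lsig_def Tinv_def cells_def)

lemma Lsig_cong:
  assumes "\<forall>(i, j)\<in>cells n d. a i j = b i j"
  shows "Lsig n d s a = Lsig n d s b"
proof
  fix i
  show "Lsig n d s a i = Lsig n d s b i"
  proof (cases "i \<in> {1..n}")
    case True
    then show ?thesis
      using assms Lblock_cong[of "d i" "a i" "b i" "s i"] by (simp add: Lsig_block cells_def)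
  next
    case False
    show ?thesis unfolding Lsig_def if_not_P[OF False] by (rule refl)
  qed
qed

lemma Lsig_convex_comb:
  "Lsig n d s (\<lambda>i j. (1 - u) * a i j + u * b i j) = (\<lambda>i j. (1 - u) * Lsig n d s a i j + u * Lsig n d s b i j)"
  by (auto simp: fun_eq_iff Lsig_def Lblock_def[symmetric] Lblock_convex_comb)

lemma Lsig_step:
  assumes "inverse_perms (d i) (s i) t" "g i \<le> d i" "(i, j) \<in> cells n d"
  shows "Lsig n d s (\<lambda>i j. of_bool (j \<le> g i)) i j = of_bool (j \<le> s i (g i))"
  using Lblock_step[OF assms(1,2)] assms(3) by (simp add: Lsig_block cells_def)

section \<open>The formulation\<close>

definition upper_cut :: "real \<Rightarrow> real \<Rightarrow> real" where
  "upper_cut u v = max (v - u) 0 / (1 - u)"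

definition lower_cut :: "real \<Rightarrow> real \<Rightarrow> real" where
  "lower_cut u v = min v u / u"

lemma cuts_mono:
  assumes "0 < u" "u < 1"
  shows "mono (upper_cut u)" "mono (lower_cut u)"
  using assms by (auto intro!: monoI divide_right_mono simp: upper_cut_def lower_cut_def)

lemma cuts_values:
  assumes "0 < u" "u < 1"
  shows "upper_cut u 0 = 0" "upper_cut u 1 = 1" "upper_cut u u = 0"
    "lower_cut u 0 = 0" "lower_cut u 1 = 1" "lower_cut u u = 1"
  using assms by (simp_all add: upper_cut_def lower_cut_def)

lemma cuts_convex_comb:
  assumes "0 < u" "u < 1"
  shows "(1 - u) * upper_cut u v + u * lower_cut u v = v"
  using assms by (simp add: upper_cut_def lower_cut_def max_def min_def)

locale supermodular_hypograph =
  fixes n :: nat and d :: "nat \<Rightarrow> nat" and p :: "nat \<Rightarrow> nat \<Rightarrow> real"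
    and f :: "nat \<Rightarrow> real \<Rightarrow> real" and L U :: "nat \<Rightarrow> real"
    and phi :: "(nat \<Rightarrow> real) \<Rightarrow> real" and \<sigma> :: "nat \<Rightarrow> nat \<Rightarrow> nat"
  assumes d_pos: "\<forall>i\<in>{1..n}. d i \<ge> 1"
    and f_range: "\<forall>i\<in>{1..n}. \<forall>j\<in>{0..d i}. L i \<le> f i (p i j) \<and> f i (p i j) \<le> U i"
    and phi_super: "supermodular_on (dom_box n L U) phi"
    and \<sigma>_perm: "\<forall>i\<in>{1..n}. bij_betw (\<sigma> i) {0..d i} {0..d i}"
    and \<sigma>_sort: "\<forall>i\<in>{1..n}. \<forall>j\<in>{0..<d i}. f i (p i (\<sigma> i j)) \<le> f i (p i (\<sigma> i (Suc j)))"
begin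

definition \<tau> :: "nat \<Rightarrow> nat \<Rightarrow> nat" where
  "\<tau> i = inv_into {0..d i} (\<sigma> i)"

abbreviation Ps :: "(nat \<Rightarrow> nat) \<Rightarrow> real" where
  "Ps \<equiv> psi n p f phi \<sigma>"

lemma inverse_perms_\<sigma>_\<tau>: "i \<in> {1..n} \<Longrightarrow> inverse_perms (d i) (\<sigma> i) (\<tau> i)"
  unfolding \<tau>_def using \<sigma>_perm by (simp add: inverse_perms_inv_into)

lemma f_\<sigma>_mono:
  assumes "i \<in> {1..n}" "k \<le> k'" "k' \<le> d i"
  shows "f i (p i (\<sigma> i k)) \<le> f i (p i (\<sigma> i k'))"
  using assms(2,3)
proof (induction k' rule: dec_induct)
  case (step m)
  then show ?case using \<sigma>_sort assms(1) by (auto intro: order_trans)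
qed simp

text \<open>Sorting by \<open>\<sigma>\<close> makes each coordinate of the argument of \<open>phi\<close> monotone in the grid
  index, so grid maxima and minima go to maxima and minima in the box.\<close>

sublocale grid_supermodular n d Ps
proof
  fix a b :: "nat \<Rightarrow> nat"
  let ?G = "\<lambda>a. vecn n (\<lambda>i. f i (p i (\<sigma> i (a i))))"
  show "Ps a = Ps b" if "\<forall>i\<in>{1..n}. a i = b i"
    using that by (simp add: psi_def vecn_def cong: if_cong)
  assume ab: "\<forall>i\<in>{1..n}. a i \<le> d i \<and> b i \<le> d i"
  have box: "?G c \<in> dom_box n L U" if "\<forall>i\<in>{1..n}. c i \<le> d i" for c
    using that f_range inverse_permsD(1)[OF inverse_perms_\<sigma>_\<tau>] by (auto simp: dom_box_def vecn_def)
  have "max (f i (p i (\<sigma> i (a i)))) (f i (p i (\<sigma> i (b i)))) = f i (p i (\<sigma> i (max (a i) (b i))))"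
    "min (f i (p i (\<sigma> i (a i)))) (f i (p i (\<sigma> i (b i)))) = f i (p i (\<sigma> i (min (a i) (b i))))"
    if "i \<in> {1..n}" for i
    using ab that f_\<sigma>_mono[OF that, of "a i" "b i"] f_\<sigma>_mono[OF that, of "b i" "a i"]
    by (cases "a i \<le> b i"; simp add: max_def min_def)+
  then have "?G (\<lambda>i. max (a i) (b i)) = (\<lambda>i. max (?G a i) (?G b i))"
    "?G (\<lambda>i. min (a i) (b i)) = (\<lambda>i. min (?G a i) (?G b i))"
    by (auto simp: fun_eq_iff vecn_def)
  moreover have "phi (?G a) + phi (?G b) \<le> phi (\<lambda>i. max (?G a i) (?G b i)) + phi (\<lambda>i. min (?G a i) (?G b i))"
    using phi_super box ab unfolding supermodular_on_def by blast
  ultimately show "Ps a + Ps b \<le> Ps (\<lambda>i. max (a i) (b i)) + Ps (\<lambda>i. min (a i) (b i))"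
    by (simp add: psi_def)
qed

definition x_of :: "(nat \<Rightarrow> nat \<Rightarrow> real) \<Rightarrow> nat \<Rightarrow> real" where
  "x_of z i = (if i \<in> {1..n} then p i 0 + (\<Sum>j = 1..d i. (p i j - p i (j - 1)) * z i j) else 0)"

definition lift :: "(nat \<Rightarrow> nat \<Rightarrow> real) \<Rightarrow> real \<Rightarrow> pt" where
  "lift z' mu = (x_of (Lsig n d \<sigma> z'), Lsig n d \<sigma> z', mu)"

lemma Lsig_\<tau>_\<sigma>: "(i, j) \<in> cells n d \<Longrightarrow> Lsig n d \<tau> (Lsig n d \<sigma> z) i j = z i j"
  using Lblock_inverse[OF inverse_perms_\<sigma>_\<tau>] by (auto simp: Lsig_block cells_def)

lemma Lsig_\<sigma>_\<tau>: "(i, j) \<in> cells n d \<Longrightarrow> Lsig n d \<sigma> (Lsig n d \<tau> z) i j = z i j"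
  using Lblock_inverse[OF inverse_perms_sym[OF inverse_perms_\<sigma>_\<tau>]] by (auto simp: Lsig_block cells_def)

lemma Lsig_\<sigma>_\<tau>_eq:
  assumes "(x, z, mu) \<in> mip_space n d"
  shows "Lsig n d \<sigma> (Lsig n d \<tau> z) = z"
proof (intro ext)
  fix i j
  show "Lsig n d \<sigma> (Lsig n d \<tau> z) i j = z i j"
    using assms Lsig_\<sigma>_\<tau> Lsig_outside by (cases "(i, j) \<in> cells n d") (auto simp: mip_space_def cells_def)
qed

lemma in_Delta_Lsig_\<sigma>_iff: "i \<in> {1..n} \<Longrightarrow> in_Delta (d i) (Lsig n d \<sigma> z i) \<longleftrightarrow> in_Delta (d i) (z i)"
  using in_Delta_Lblock_iff[OF inverse_perms_\<sigma>_\<tau>] d_pos by (simp add: Lsig_block)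

lemma in_Delta_Lsig_\<tau>_iff: "i \<in> {1..n} \<Longrightarrow> in_Delta (d i) (Lsig n d \<tau> z i) \<longleftrightarrow> in_Delta (d i) (z i)"
  using in_Delta_Lblock_iff[OF inverse_perms_sym[OF inverse_perms_\<sigma>_\<tau>]] d_pos by (simp add: Lsig_block)

lemma x_of_step:
  assumes "\<forall>i\<in>{1..n}. g i \<le> d i" "i \<in> {1..n}"
  shows "x_of (Lsig n d \<sigma> (\<lambda>i j. of_bool (j \<le> g i))) i = p i (\<sigma> i (g i))"
proof -
  have "x_of (Lsig n d \<sigma> (\<lambda>i j. of_bool (j \<le> g i))) i =
      p i 0 + (\<Sum>j = 1..d i. (p i j - p i (j - 1)) * of_bool (j \<le> \<sigma> i (g i)))"
    using assms Lsig_step[where d=d and s=\<sigma> and i=i, OF inverse_perms_\<sigma>_\<tau>[OF assms(2)]]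
    by (simp add: x_of_def cells_def)
  also have "\<dots> = p i (\<sigma> i (g i))"
    using inverse_permsD(1)[OF inverse_perms_\<sigma>_\<tau>[OF assms(2)], of "g i"] assms
    by (intro sum_step_telescope) simp
  finally show ?thesis .
qed

lemma lift_convex_comb:
  "lift (\<lambda>i j. (1 - u) * za i j + u * zb i j) ((1 - u) * ma + u * mb) = comb u (lift za ma) (lift zb mb)"
proof -
  have "c * ((1 - u) * x + u * y) = (1 - u) * (c * x) + u * (c * y)" for c x y :: real
    by algebra
  then have "x_of (\<lambda>i j. (1 - u) * A i j + u * B i j) = (\<lambda>i. (1 - u) * x_of A i + u * x_of B i)" for A B
    by (simp add: fun_eq_iff x_of_def sum.distrib flip: sum_distrib_left) (simp add: algebra_simps)
  then show ?thesis by (simp add: lift_def comb_def Lsig_convex_comb)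
qed

text \<open>Eliminating \<open>z' = L\<^sup>\<tau>(z)\<close> makes every constraint affine in \<open>(x, z, \<mu>)\<close>.\<close>

lemma E_relax_iff:
  "q \<in> E_relax n d p f phi \<sigma> \<longleftrightarrow> q \<in> mip_space n d \<and>
     (\<forall>i\<in>{1..n}. fst q i = x_of (fst (snd q)) i \<and> in_Delta (d i) (fst (snd q) i)) \<and>
     (\<forall>\<pi>. staircase n d \<pi> \<longrightarrow> snd (snd q) \<le> stair_affine n d Ps \<pi> (Lsig n d \<tau> (fst (snd q))))"
proof -
  obtain x z mu where q: "q = (x, z, mu)" by (cases q)
  have "(\<exists>z'. Lsig n d \<sigma> z' = z \<and> (\<forall>\<pi>. staircase n d \<pi> \<longrightarrow> mu \<le> stair_affine n d Ps \<pi> z'))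
      \<longleftrightarrow> (\<forall>\<pi>. staircase n d \<pi> \<longrightarrow> mu \<le> stair_affine n d Ps \<pi> (Lsig n d \<tau> z))"
    if "q \<in> mip_space n d"
  proof
    assume "\<exists>z'. Lsig n d \<sigma> z' = z \<and> (\<forall>\<pi>. staircase n d \<pi> \<longrightarrow> mu \<le> stair_affine n d Ps \<pi> z')"
    then obtain z' where z': "Lsig n d \<sigma> z' = z" "\<forall>\<pi>. staircase n d \<pi> \<longrightarrow> mu \<le> stair_affine n d Ps \<pi> z'"
      by blast
    have "\<forall>(i, j)\<in>cells n d. z' i j = Lsig n d \<tau> z i j"
      using z'(1) by (auto simp: Lsig_\<tau>_\<sigma>)
    then show "\<forall>\<pi>. staircase n d \<pi> \<longrightarrow> mu \<le> stair_affine n d Ps \<pi> (Lsig n d \<tau> z)"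
      using stair_affine_cong z'(2) by metis
  qed (use Lsig_\<sigma>_\<tau>_eq that q in blast)
  then show ?thesis
    by (auto simp: q E_relax_def stair_affine_def in_B_def in_Delta_def x_of_def)
qed

lemma E_relax_iff_lift:
  "q \<in> E_relax n d p f phi \<sigma> \<longleftrightarrow> (\<exists>z' mu. (\<forall>i\<in>{1..n}. in_Delta (d i) (z' i)) \<and>
     (\<forall>\<pi>. staircase n d \<pi> \<longrightarrow> mu \<le> stair_affine n d Ps \<pi> z') \<and> q = lift z' mu)"
proof
  assume "q \<in> E_relax n d p f phi \<sigma>"
  then obtain x z mu where q: "q = (x, z, mu)" "q \<in> mip_space n d"
    "\<forall>i\<in>{1..n}. x i = x_of z i \<and> in_Delta (d i) (z i)"
    "\<forall>\<pi>. staircase n d \<pi> \<longrightarrow> mu \<le> stair_affine n d Ps \<pi> (Lsig n d \<tau> z)"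
    unfolding E_relax_iff by (cases q) auto
  have "x = x_of z" using q by (auto simp: fun_eq_iff x_of_def mip_space_def)
  then have "q = lift (Lsig n d \<tau> z) mu" using Lsig_\<sigma>_\<tau>_eq q by (simp add: lift_def)
  then show "\<exists>z' mu. (\<forall>i\<in>{1..n}. in_Delta (d i) (z' i)) \<and>
     (\<forall>\<pi>. staircase n d \<pi> \<longrightarrow> mu \<le> stair_affine n d Ps \<pi> z') \<and> q = lift z' mu"
    using q in_Delta_Lsig_\<tau>_iff by blast
next
  assume "\<exists>z' mu. (\<forall>i\<in>{1..n}. in_Delta (d i) (z' i)) \<and>
     (\<forall>\<pi>. staircase n d \<pi> \<longrightarrow> mu \<le> stair_affine n d Ps \<pi> z') \<and> q = lift z' mu"
  then obtain z' mu where z': "\<forall>i\<in>{1..n}. in_Delta (d i) (z' i)"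
    "\<forall>\<pi>. staircase n d \<pi> \<longrightarrow> mu \<le> stair_affine n d Ps \<pi> z'" and q: "q = lift z' mu" by blast
  have "stair_affine n d Ps \<pi> (Lsig n d \<tau> (Lsig n d \<sigma> z')) = stair_affine n d Ps \<pi> z'"
    if "staircase n d \<pi>" for \<pi>
    using stair_affine_cong[OF that] Lsig_\<tau>_\<sigma> by blast
  moreover have "lift z' mu \<in> mip_space n d"
    using Lsig_outside by (auto simp: lift_def mip_space_def x_of_def cells_def)
  ultimately show "q \<in> E_relax n d p f phi \<sigma>"
    using z' in_Delta_Lsig_\<sigma>_iff unfolding E_relax_iff q by (simp add: lift_def)
qed

text \<open>Restricted to \<open>{1..N}\<close>, there are only finitely many staircases.\<close>

definition constraint_funs :: "(pt \<Rightarrow> real) set" where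
  "constraint_funs =
     (\<lambda>i q. fst q i - x_of (fst (snd q)) i) ` {1..n} \<union>
     (\<lambda>i q. x_of (fst (snd q)) i - fst q i) ` {1..n} \<union>
     (\<lambda>i q. fst (snd q) i 1 - 1) ` {1..n} \<union>
     (\<lambda>i q. - fst (snd q) i (d i)) ` {1..n} \<union>
     (\<lambda>(i, j) q. fst (snd q) i (Suc j) - fst (snd q) i j) ` Sigma {1..n} (\<lambda>i. {1..<d i}) \<union>
     (\<lambda>\<pi> q. snd (snd q) - stair_affine n d Ps \<pi> (Lsig n d \<tau> (fst (snd q)))) `
       (\<lambda>\<pi>. restrict \<pi> {1..total_dim n d}) ` {\<pi>. staircase n d \<pi>}"

lemma E_relax_eq_constraints:
  "E_relax n d p f phi \<sigma> = {q\<in>mip_space n d. \<forall>g\<in>constraint_funs. g q \<le> 0}"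
proof -
  have Delta: "in_Delta (d i) v \<longleftrightarrow> v 1 - 1 \<le> 0 \<and> - v (d i) \<le> 0 \<and> (\<forall>j\<in>{1..<d i}. v (Suc j) - v j \<le> 0)"
    if "i \<in> {1..n}" for i v
    using d_pos that by (auto simp: in_Delta_def)
  have "(\<forall>g\<in>constraint_funs. g q \<le> 0) \<longleftrightarrow>
     (\<forall>i\<in>{1..n}. fst q i = x_of (fst (snd q)) i \<and> in_Delta (d i) (fst (snd q) i)) \<and>
     (\<forall>\<pi>. staircase n d \<pi> \<longrightarrow> snd (snd q) \<le> stair_affine n d Ps \<pi> (Lsig n d \<tau> (fst (snd q))))" for q
    unfolding constraint_funs_def ball_Un Ball_image_comp
    by (auto simp: Delta stair_affine_restrict[simplified] intro: order.antisym)
  then show ?thesis using E_relax_iff by blast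
qed

lemma finite_constraint_funs: "finite constraint_funs"
proof -
  have "(\<lambda>\<pi>. restrict \<pi> {1..total_dim n d}) ` {\<pi>. staircase n d \<pi>} \<subseteq> Pi\<^sub>E {1..total_dim n d} (\<lambda>_. cells n d)"
    using staircase_cell by (auto simp: restrict_PiE_iff)
  then have "finite ((\<lambda>\<pi>. restrict \<pi> {1..total_dim n d}) ` {\<pi>. staircase n d \<pi>})"
    by (rule finite_subset) (simp add: finite_PiE)
  then show ?thesis by (simp add: constraint_funs_def)
qed

lemma affine_constraint_funs: "\<forall>g\<in>constraint_funs. affine_on_space n d g"
proof -
  have "affine_on_space n d (\<lambda>q. x_of (fst (snd q)) i)" for i
    unfolding x_of_def
    by (intro affine_if affine_add affine_const affine_sum ballI finite_atLeastAtMost affine_scale affine_z)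
  moreover have "affine_on_space n d (\<lambda>q. stair_affine n d Ps \<pi> (Lsig n d \<tau> (fst (snd q))))" for \<pi>
    unfolding stair_affine_def
    by (intro affine_add affine_const affine_sum ballI finite_atLeastAtMost affine_scale affine_Lsig)
  ultimately show ?thesis
    unfolding constraint_funs_def
    by (auto intro!: affine_diff affine_uminus affine_x affine_z affine_const affine_mu)
qed

lemma polyhedron_E_relax: "polyhedron_in n d (E_relax n d p f phi \<sigma>)"
  unfolding E_relax_eq_constraints
  by (rule polyhedron_of_affine_le[OF finite_constraint_funs affine_constraint_funs])

lemma psi_eq_phi:
  assumes "\<forall>i\<in>{1..n}. x i = p i (\<sigma> i (g i))"
  shows "Ps g = phi (vecn n (\<lambda>i. f i (x i)))"
  using assms unfolding psi_def by (intro arg_cong[where f=phi]) (simp add: vecn_def fun_eq_iff)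

lemma z_binary_lift_step:
  assumes "\<forall>i\<in>{1..n}. g i \<le> d i"
  shows "z_binary n d (lift (\<lambda>i j. of_bool (j \<le> g i)) mu)"
  using assms Lsig_step[where d=d and s=\<sigma>, OF inverse_perms_\<sigma>_\<tau>]
  by (simp add: lift_def z_binary_def cells_def)

lemma binary_of_z_binary_lift:
  assumes z': "\<forall>i\<in>{1..n}. in_Delta (d i) (z' i)" and bin: "z_binary n d (lift z' mu)"
  shows "\<forall>(i, j)\<in>cells n d. z' i j \<in> {0, 1}"
proof -
  let ?z = "Lsig n d \<sigma> z'"
  have "\<forall>i\<in>{1..n}. in_Delta (d i) (?z i)" using z' in_Delta_Lsig_\<sigma>_iff by blast
  moreover have "\<forall>(i, j)\<in>cells n d. ?z i j \<in> {0, 1}"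
    using bin unfolding lift_def z_binary_def cells_def by simp
  ultimately obtain g \<pi> where g: "\<forall>i\<in>{1..n}. g i \<le> d i" "\<forall>(i, j)\<in>cells n d. ?z i j = of_bool (j \<le> g i)"
    by (rule binary_Delta_step_form)
  have "z' i j = of_bool (j \<le> \<tau> i (g i))" if ij: "(i, j) \<in> cells n d" for i j
  proof -
    have i: "i \<in> {1..n}" using ij by (simp add: cells_def)
    have "z' i j = Lsig n d \<tau> ?z i j" using Lsig_\<tau>_\<sigma>[OF ij] by simp
    also have "\<dots> = Lsig n d \<tau> (\<lambda>i j. of_bool (j \<le> g i)) i j" using Lsig_cong[OF g(2)] by simp
    also have "\<dots> = of_bool (j \<le> \<tau> i (g i))"
      using Lsig_step[where d=d and s=\<tau>, OF inverse_perms_sym[OF inverse_perms_\<sigma>_\<tau>[OF i]]] g(1) i ij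
      by blast
    finally show ?thesis .
  qed
  then show ?thesis by auto
qed

lemma proj_E_set_subset_hypograph:
  "(\<lambda>(x, z, mu). (x, mu)) ` E_set n d p f phi \<sigma> \<subseteq> hypograph n d p f phi"
proof clarify
  fix x z mu assume E: "(x, z, mu) \<in> E_set n d p f phi \<sigma>"
  then obtain z' mu' where z': "\<forall>i\<in>{1..n}. in_Delta (d i) (z' i)"
    and bound: "\<forall>\<pi>. staircase n d \<pi> \<longrightarrow> mu' \<le> stair_affine n d Ps \<pi> z'"
    and q: "(x, z, mu) = lift z' mu'"
    unfolding E_set_def E_relax_iff_lift by blast
  have bin: "z_binary n d (lift z' mu')" using E q by (simp add: E_set_def)
  obtain g \<pi> where st: "staircase n d \<pi>" and g: "\<forall>i\<in>{1..n}. g i \<le> d i"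
    "\<forall>(i, j)\<in>cells n d. z' i j = of_bool (j \<le> g i)" and val: "stair_affine n d Ps \<pi> z' = Ps g"
    by (rule binary_Delta_step_form[OF z' binary_of_z_binary_lift[OF z' bin]])
  have x_eq: "x = x_of (Lsig n d \<sigma> (\<lambda>i j. of_bool (j \<le> g i)))" and mu: "mu = mu'"
    using q Lsig_cong[OF g(2)] by (simp_all add: lift_def)
  have x: "\<forall>i\<in>{1..n}. x i = p i (\<sigma> i (g i))"
    using x_of_step[OF g(1)] x_eq by simp
  have "x \<in> gridX n d p"
    unfolding gridX_def
  proof (intro CollectI conjI ballI allI impI)
    fix i assume i: "i \<in> {1..n}"
    show "\<exists>j\<in>{0..d i}. x i = p i j"
      using x i g(1) inverse_permsD(1)[OF inverse_perms_\<sigma>_\<tau>[OF i]] by auto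
  next
    fix i assume i: "i \<notin> {1..n}"
    show "x i = 0" unfolding x_eq x_of_def if_not_P[OF i] by (rule refl)
  qed
  moreover have "mu \<le> phi (vecn n (\<lambda>i. f i (x i)))"
  proof -
    have "mu' \<le> stair_affine n d Ps \<pi> z'" using bound st by blast
    then show ?thesis using val mu psi_eq_phi[OF x] by simp
  qed
  ultimately show "(x, mu) \<in> hypograph n d p f phi" by (simp add: hypograph_def)
qed

lemma hypograph_subset_proj_E_set:
  "hypograph n d p f phi \<subseteq> (\<lambda>(x, z, mu). (x, mu)) ` E_set n d p f phi \<sigma>"
proof clarify
  fix x mu assume "(x, mu) \<in> hypograph n d p f phi"
  then have x: "x \<in> gridX n d p" and mu: "mu \<le> phi (vecn n (\<lambda>i. f i (x i)))"
    by (auto simp: hypograph_def)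
  have "\<forall>i\<in>{1..n}. \<exists>j. j \<in> {0..d i} \<and> x i = p i j" using x unfolding gridX_def by blast
  from bchoice[OF this] obtain k where k: "\<forall>i\<in>{1..n}. k i \<in> {0..d i} \<and> x i = p i (k i)" by blast
  define g where "g i = \<tau> i (k i)" for i
  have g: "\<forall>i\<in>{1..n}. g i \<le> d i" "\<forall>i\<in>{1..n}. x i = p i (\<sigma> i (g i))"
    using k inverse_permsD[OF inverse_perms_\<sigma>_\<tau>] by (auto simp: g_def)
  let ?q = "lift (\<lambda>i j. of_bool (j \<le> g i)) mu"
  have "\<forall>\<pi>. staircase n d \<pi> \<longrightarrow> mu \<le> stair_affine n d Ps \<pi> (\<lambda>i j. of_bool (j \<le> g i))"
    using mu psi_eq_phi[OF g(2)] Ps_le_stair_affine_step[OF _ g(1)] by fastforce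
  then have "?q \<in> E_relax n d p f phi \<sigma>"
    unfolding E_relax_iff_lift
    by (intro exI[of _ "\<lambda>i j. of_bool (j \<le> g i)"] exI[of _ mu] conjI) (auto simp: in_Delta_def)
  then have "?q \<in> E_set n d p f phi \<sigma>"
    using z_binary_lift_step[OF g(1)] by (simp add: E_set_def)
  moreover have "x_of (Lsig n d \<sigma> (\<lambda>i j. of_bool (j \<le> g i))) = x"
    using x_of_step[OF g(1)] g(2) x by (auto simp: fun_eq_iff x_of_def gridX_def)
  ultimately show "(x, mu) \<in> (\<lambda>(x, z, mu). (x, mu)) ` E_set n d p f phi \<sigma>"
    by (force simp: lift_def)
qed

lemma lift_sorting_mem_E_relax:
  assumes w: "\<forall>i\<in>{1..n}. in_Delta (d i) (w i)" and sorting: "sorting_staircase n d w \<pi> pos"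
    and "0 \<le> \<delta>"
  shows "lift w (stair_affine n d Ps \<pi> w - \<delta>) \<in> E_relax n d p f phi \<sigma>"
  unfolding E_relax_iff_lift
proof (intro exI conjI allI impI)
  fix \<pi>' assume "staircase n d \<pi>'"
  then show "stair_affine n d Ps \<pi> w - \<delta> \<le> stair_affine n d Ps \<pi>' w"
    using stair_affine_sorting_le[OF w sorting] assms(3) by force
qed (use w in auto)

lemma fractional_of_not_z_binary_lift:
  assumes z': "\<forall>i\<in>{1..n}. in_Delta (d i) (z' i)" and nb: "\<not> z_binary n d (lift z' mu)"
  obtains i j where "(i, j) \<in> cells n d" "0 < z' i j" "z' i j < 1"
proof -
  have "\<not> (\<forall>(i, j)\<in>cells n d. z' i j \<in> {0, 1})"
  proof
    assume "\<forall>(i, j)\<in>cells n d. z' i j \<in> {0, 1}"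
    then obtain g \<pi> where g: "\<forall>i\<in>{1..n}. g i \<le> d i" "\<forall>(i, j)\<in>cells n d. z' i j = of_bool (j \<le> g i)"
      by (rule binary_Delta_step_form[OF z'])
    then have "lift z' mu = lift (\<lambda>i j. of_bool (j \<le> g i)) mu" using Lsig_cong[OF g(2)] by (simp add: lift_def)
    then show False using nb z_binary_lift_step[OF g(1)] by simp
  qed
  then obtain i j where ij: "(i, j) \<in> cells n d" and "z' i j \<notin> {0, 1}" by blast
  moreover have "0 \<le> z' i j" "z' i j \<le> 1"
    using in_Delta_bounds[of "d i" "z' i" j] z' ij by (auto simp: cells_def)
  ultimately show ?thesis using that by force
qed

text \<open>Cutting \<open>z'\<close> at the level \<open>u\<close> of a fractional coordinate and rescaling both parts
  gives two points of \<open>\<Delta>\<close> with the same sorting staircase as \<open>z'\<close>, on which the bound is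
  affine; lowering both bounds by the slack \<open>\<delta>\<close> of \<open>mu\<close> keeps them feasible.\<close>

lemma lift_split_at_fractional:
  assumes z': "\<forall>i\<in>{1..n}. in_Delta (d i) (z' i)"
    and bound: "\<forall>\<pi>. staircase n d \<pi> \<longrightarrow> mu \<le> stair_affine n d Ps \<pi> z'"
    and ij: "(i, j) \<in> cells n d" and u: "0 < z' i j" "z' i j < 1"
  shows "\<exists>a\<in>E_relax n d p f phi \<sigma>. \<exists>b\<in>E_relax n d p f phi \<sigma>. a \<noteq> b \<and> lift z' mu = comb (z' i j) a b"
proof -
  define u where "u = z' i j"
  define za where "za i j = upper_cut u (z' i j)" for i j
  define zb where "zb i j = lower_cut u (z' i j)" for i j
  note cut_mono = cuts_mono[OF u[folded u_def]] and cut_values = cuts_values[OF u[folded u_def]]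
  have split: "z' = (\<lambda>i j. (1 - u) * za i j + u * zb i j)"
    by (simp add: fun_eq_iff za_def zb_def cuts_convex_comb[OF u[folded u_def]])
  obtain \<pi> pos where sorting: "sorting_staircase n d z' \<pi> pos"
    using sorting_staircase_exists[OF z'] by blast
  define \<delta> where "\<delta> = stair_affine n d Ps \<pi> z' - mu"
  have \<delta>: "0 \<le> \<delta>" using bound sorting_staircaseD(1)[OF z' sorting] by (simp add: \<delta>_def)
  define a where "a = lift za (stair_affine n d Ps \<pi> za - \<delta>)"
  define b where "b = lift zb (stair_affine n d Ps \<pi> zb - \<delta>)"
  have "\<forall>i\<in>{1..n}. in_Delta (d i) (za i)" "\<forall>i\<in>{1..n}. in_Delta (d i) (zb i)"
    unfolding za_def zb_def
    using z' in_Delta_comp_mono[OF _ cut_mono(1)] in_Delta_comp_mono[OF _ cut_mono(2)] cut_values by simp_all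
  moreover have "sorting_staircase n d za \<pi> pos" "sorting_staircase n d zb \<pi> pos"
    unfolding za_def zb_def using sorting_staircase_comp_mono[OF sorting] cut_mono by blast+
  ultimately have "a \<in> E_relax n d p f phi \<sigma>" "b \<in> E_relax n d p f phi \<sigma>"
    unfolding a_def b_def using lift_sorting_mem_E_relax \<delta> by blast+
  moreover have "lift z' mu = comb u a b"
  proof -
    have "stair_affine n d Ps \<pi> z' = (1 - u) * stair_affine n d Ps \<pi> za + u * stair_affine n d Ps \<pi> zb"
      by (subst split) (rule stair_affine_convex_comb)
    then have "(1 - u) * (stair_affine n d Ps \<pi> za - \<delta>) + u * (stair_affine n d Ps \<pi> zb - \<delta>) = mu"
      by (simp add: \<delta>_def algebra_simps)
    then show ?thesis by (simp add: a_def b_def split flip: lift_convex_comb)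
  qed
  moreover have "a \<noteq> b"
  proof
    assume "a = b"
    then have "Lsig n d \<tau> (Lsig n d \<sigma> za) i j = Lsig n d \<tau> (Lsig n d \<sigma> zb) i j"
      by (simp add: a_def b_def lift_def)
    then show False using Lsig_\<tau>_\<sigma>[OF ij] cut_values by (simp add: za_def zb_def u_def)
  qed
  ultimately show ?thesis unfolding u_def by blast
qed

lemma vertex_z_binary:
  assumes V: "vertex_of (E_relax n d p f phi \<sigma>) q"
  shows "z_binary n d q"
proof (rule ccontr)
  assume nb: "\<not> z_binary n d q"
  obtain z' mu where z': "\<forall>i\<in>{1..n}. in_Delta (d i) (z' i)"
    and bound: "\<forall>\<pi>. staircase n d \<pi> \<longrightarrow> mu \<le> stair_affine n d Ps \<pi> z'" and q: "q = lift z' mu"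
    using V unfolding vertex_of_def E_relax_iff_lift by blast
  obtain i j where "(i, j) \<in> cells n d" "0 < z' i j" "z' i j < 1"
    using fractional_of_not_z_binary_lift[OF z'] nb q by blast
  with lift_split_at_fractional[OF z' bound] show False
    using V q unfolding vertex_of_def by blast
qed

lemma ideal_MIP_formulation_E_set:
  "ideal_MIP_formulation n d (E_relax n d p f phi \<sigma>) (E_set n d p f phi \<sigma>) (hypograph n d p f phi)"
  unfolding ideal_MIP_formulation_def MIP_formulation_def
  using polyhedron_E_relax proj_E_set_subset_hypograph hypograph_subset_proj_E_set vertex_z_binary
  by (auto simp: E_set_def)

end

theorem theorem1:
  fixes n :: nat and d :: "nat \<Rightarrow> nat" and p :: "nat \<Rightarrow> nat \<Rightarrow> real"
    and f :: "nat \<Rightarrow> real \<Rightarrow> real" and L U :: "nat \<Rightarrow> real"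
    and phi :: "(nat \<Rightarrow> real) \<Rightarrow> real" and \<sigma> :: "nat \<Rightarrow> nat \<Rightarrow> nat"
  assumes n_pos: "n \<ge> 1"
    and d_pos: "\<forall>i\<in>{1..n}. d i \<ge> 1"
    and p_incr: "\<forall>i\<in>{1..n}. \<forall>j\<in>{1..d i}. p i (j - 1) < p i j"
    and f_range: "\<forall>i\<in>{1..n}. \<forall>j\<in>{0..d i}. L i \<le> f i (p i j) \<and> f i (p i j) \<le> U i"
    and phi_super: "supermodular_on (dom_box n L U) phi"
    and \<sigma>_perm: "\<forall>i\<in>{1..n}. bij_betw (\<sigma> i) {0..d i} {0..d i}"
    and \<sigma>_sort: "\<forall>i\<in>{1..n}. \<forall>j\<in>{0..<d i}. f i (p i (\<sigma> i j)) \<le> f i (p i (\<sigma> i (Suc j)))"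
  shows "ideal_MIP_formulation n d (E_relax n d p f phi \<sigma>) (E_set n d p f phi \<sigma>)
           (hypograph n d p f phi)"
proof -
  interpret supermodular_hypograph n d p f L U phi \<sigma>
    using d_pos f_range phi_super \<sigma>_perm \<sigma>_sort by (rule supermodular_hypograph.intro)
  show ?thesis by (rule ideal_MIP_formulation_E_set)
qed

end
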